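(* Let $g\geq1$. The group $\mathbb{H}_g$ is isomorphic to $$\pi_1(\Sigma_{g,1})\times\langle\sigma\rangle\big/\big\langle [\alpha,\beta]=\sigma^{2\omega(\alpha,\beta)}\ \forall \alpha,\beta\in\pi_1(\Sigma_{g,1})\big\rangle,$$ via the map sending the standard generators $\alpha_i,\beta_i$ to $a_i,b_i$ and $\sigma$ to $\sigma$. Moreover, the kernel of the surjection $\varphi_1^{\mathbb{H}_g}:\pi_1(\Sigma_{g,1})\to\mathbb{H}_g$, $\alpha_i\mapsto a_i$, $\beta_i\mapsto b_i$, is stable under the action of $\mathrm{Mod}(\Sigma_{g,1})$.
   Context: $\Sigma_{g,1}$ is a compact connected oriented surface of genus $g$ with one boundary component; $\mathrm{Mod}(\Sigma_{g,1})$ is the group of isotopy classes of orientation-preserving homeomorphisms fixing the boundary pointwise, acting on $\pi_1(\Sigma_{g,1},\xi_1)$ for a base point $\xi_1\in\partial\Sigma_{g,1}$. $\pi_1(\Sigma_{g,1},\xi_1)$ is free on standard generators $\alpha_1,\beta_1,\dots,\alpha_g,\beta_g$, where $\alpha_i,\beta_i$ have algebraic intersection $1$ and distinct pairs are disjoint. $\omega$ denotes the algebraic intersection form on $H_1(\Sigma_{g,1};\mathbb{Z})$, evaluated on homology classes of loops. $\mathbb{H}_g=\langle a_1,b_1,\dots,a_g,b_g,\sigma\mid [a_i,a_j],[b_i,b_j],[\sigma,a_i],[\sigma,b_i],[a_i,b_j]\sigma^{-2\delta_{ij}}\rangle$. *)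

theory Defs
  imports "HOL-Algebra.Algebra"
begin

text \<open>A letter is a pair (generator, exponent sign); True means exponent +1,
  False means exponent -1.\<close>

type_synonym 'a fword = "('a \<times> bool) list"

fun red :: "'a fword \<Rightarrow> 'a fword" where
  "red [] = []"
| "red (x # xs) = (case red xs of
      [] \<Rightarrow> [x]
    | y # ys \<Rightarrow> (if fst x = fst y \<and> snd x \<noteq> snd y then ys else x # y # ys))"

definition free_group :: "'a set \<Rightarrow> 'a fword monoid" where
  "free_group Y = \<lparr> carrier = {w. red w = w \<and> fst ` set w \<subseteq> Y},
                    monoid.mult = (\<lambda>u v. red (u @ v)),
                    one = [] \<rparr>"

definition winv :: "'a fword \<Rightarrow> 'a fword" where
  "winv w = rev (map (\<lambda>(x, b). (x, \<not> b)) w)"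

text \<open>Commutator convention: [x,y] = x y x^{-1} y^{-1}.\<close>
definition wcomm :: "'a fword \<Rightarrow> 'a fword \<Rightarrow> 'a fword" where
  "wcomm u v = red (u @ v @ winv u @ winv v)"

definition normal_closure :: "('a, 'b) monoid_scheme \<Rightarrow> 'a set \<Rightarrow> 'a set" where
  "normal_closure G S =
     generate G {g \<otimes>\<^bsub>G\<^esub> s \<otimes>\<^bsub>G\<^esub> inv\<^bsub>G\<^esub> g | g s. g \<in> carrier G \<and> s \<in> S}"

definition presented_group :: "'a set \<Rightarrow> 'a fword set \<Rightarrow> 'a fword set monoid" where
  "presented_group Y R = free_group Y Mod normal_closure (free_group Y) (red ` R)"

definition pres_class :: "'a set \<Rightarrow> 'a fword set \<Rightarrow> 'a fword \<Rightarrow> 'a fword set" where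
  "pres_class Y R w = normal_closure (free_group Y) (red ` R) #>\<^bsub>free_group Y\<^esub> red w"

datatype gen = A nat | B nat | Sig

text \<open>Standard generators alpha_i = A i, beta_i = B i (i = 1..g) of the free group
  pi_1(Sigma_{g,1}); and a_i = A i, b_i = B i, sigma = Sig in H_g.\<close>

definition surf_gens :: "nat \<Rightarrow> gen set" where
  "surf_gens g = {A i | i. i \<in> {1..g}} \<union> {B i | i. i \<in> {1..g}}"

definition pi1 :: "nat \<Rightarrow> gen fword monoid" where
  "pi1 g = free_group (surf_gens g)"

definition lett :: "gen \<Rightarrow> gen fword" where
  "lett x = [(x, True)]"

text \<open>Exponent sum of a generator in a word (= coordinate of the homology class).\<close>
definition expsum :: "gen fword \<Rightarrow> gen \<Rightarrow> int" where
  "expsum w x = (\<Sum>l\<leftarrow>w. if fst l = x then (if snd l then 1 else -1) else 0)"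

definition omega :: "nat \<Rightarrow> gen fword \<Rightarrow> gen fword \<Rightarrow> int" where
  "omega g u v = (\<Sum>i\<in>{1..g}. expsum u (A i) * expsum v (B i) - expsum u (B i) * expsum v (A i))"

definition Hg_gens :: "nat \<Rightarrow> gen set" where
  "Hg_gens g = surf_gens g \<union> {Sig}"

definition Hg_rels :: "nat \<Rightarrow> gen fword set" where
  "Hg_rels g =
     {wcomm (lett (A i)) (lett (A j)) | i j. i \<in> {1..g} \<and> j \<in> {1..g}}
   \<union> {wcomm (lett (B i)) (lett (B j)) | i j. i \<in> {1..g} \<and> j \<in> {1..g}}
   \<union> {wcomm (lett Sig) (lett (A i)) | i. i \<in> {1..g}}
   \<union> {wcomm (lett Sig) (lett (B i)) | i. i \<in> {1..g}}
   \<union> {wcomm (lett (A i)) (lett (B j)) @ (if i = j then [(Sig, False), (Sig, False)] else [])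
       | i j. i \<in> {1..g} \<and> j \<in> {1..g}}"

definition Hgrp :: "nat \<Rightarrow> gen fword set monoid" where
  "Hgrp g = presented_group (Hg_gens g) (Hg_rels g)"

definition Hclass :: "nat \<Rightarrow> gen fword \<Rightarrow> gen fword set" where
  "Hclass g w = pres_class (Hg_gens g) (Hg_rels g) w"

text \<open>The infinite cyclic group <sigma> is modelled by (Z,+), sigma^k = k.\<close>
definition PxS :: "nat \<Rightarrow> (gen fword \<times> int) monoid" where
  "PxS g = pi1 g \<times>\<times> integer_group"

definition Qrel :: "nat \<Rightarrow> (gen fword \<times> int) set" where
  "Qrel g = {(wcomm u v, - 2 * omega g u v) | u v. u \<in> carrier (pi1 g) \<and> v \<in> carrier (pi1 g)}"

definition Qgrp :: "nat \<Rightarrow> (gen fword \<times> int) set monoid" where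
  "Qgrp g = PxS g Mod normal_closure (PxS g) (Qrel g)"

definition Qclass :: "nat \<Rightarrow> gen fword \<times> int \<Rightarrow> (gen fword \<times> int) set" where
  "Qclass g x = normal_closure (PxS g) (Qrel g) #>\<^bsub>PxS g\<^esub> x"

text \<open>phi_1 : pi_1 -> H_g, alpha_i -> a_i, beta_i -> b_i (words in A,B are words in H_g).\<close>
definition phi1 :: "nat \<Rightarrow> gen fword \<Rightarrow> gen fword set" where
  "phi1 g w = Hclass g w"

definition boundary_word :: "nat \<Rightarrow> gen fword" where
  "boundary_word g = red (concat (map (\<lambda>i. wcomm (lett (A i)) (lett (B i))) [1..<g+1]))"

text \<open>Action of Mod(Sigma_{g,1}) on pi_1 (Dehn--Nielsen--Baer / Zieschang): the
  automorphisms of the free group pi_1(Sigma_{g,1}, xi_1) fixing the boundary word.\<close>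
definition mcg_action :: "nat \<Rightarrow> (gen fword \<Rightarrow> gen fword) set" where
  "mcg_action g = {\<psi>. \<psi> \<in> iso (pi1 g) (pi1 g) \<and> \<psi> (boundary_word g) = boundary_word g}"

end

(*
  In H_g the generator sigma is central and [x, y] = sigma^(2 omega(x, y)) for the
  generators x, y of pi_1 = pi_1(Sigma_{g,1}).  For fixed b the map w |-> [w, b] is multiplicative
  as long as its values are central, so this relation spreads to [u, v] = sigma^(2 omega(u, v)) for
  all u, v in pi_1.  Hence (w, k) |-> [w] sigma^k kills the relators of the quotient
  Q = pi_1 x <sigma> / <[u, v] = sigma^(2 omega(u, v))> and induces Q -> H_g, and the presentation
  of H_g provides the inverse map.

  A mapping class psi fixes the boundary word [alpha_1, beta_1] ... [alpha_g, beta_g].  Mapping it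
  to the integral Heisenberg group shows that the matrix M of psi on H_1 satisfies M^T J M = J;
  since M is invertible and J^2 = -1 this gives M J M^T = J, i.e. psi preserves omega.  Thus
  psi x id maps relators of Q to relators of Q.  Via the isomorphism,
  ker phi_1 = {w | (w, 0) lies in the normal closure of these relators}, so psi preserves ker phi_1.
*)
theory Submission
  imports Defs
begin

section \<open>Free groups\<close>

definition cancels :: "'a \<times> bool \<Rightarrow> 'a \<times> bool \<Rightarrow> bool" where
  "cancels x y \<longleftrightarrow> fst x = fst y \<and> snd x \<noteq> snd y"

definition red_cons :: "'a \<times> bool \<Rightarrow> 'a fword \<Rightarrow> 'a fword" where
  "red_cons x r = (case r of [] \<Rightarrow> [x] | y # ys \<Rightarrow> (if cancels x y then ys else x # y # ys))"

lemma red_Cons: "red (x # xs) = red_cons x (red xs)"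
  unfolding red_cons_def cancels_def by simp

lemma red_cons_Nil [simp]: "red_cons x [] = [x]"
  by (simp add: red_cons_def)

lemma red_cons_Cons [simp]: "red_cons x (y # ys) = (if cancels x y then ys else x # y # ys)"
  by (simp add: red_cons_def)

declare red.simps(2) [simp del]

lemma length_red: "length (red w) \<le> length w"
  by (induction w) (auto simp: red_Cons red_cons_def split: list.split)

lemma set_red: "set (red w) \<subseteq> set w"
  by (induction w) (auto simp: red_Cons red_cons_def split: list.split)

lemma red_Cons_fixed: "red (x # w) = x # w \<Longrightarrow> red w = w"
proof (cases "red w")
  case (Cons z zs)
  assume fixed: "red (x # w) = x # w"
  show ?thesis
  proof (cases "cancels x z")
    case True
    then have "length (red w) > length w" using fixed Cons by (simp add: red_Cons)
    then show ?thesis using length_red[of w] by simp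
  qed (use fixed Cons in \<open>simp add: red_Cons\<close>)
qed (simp add: red_Cons)

lemma red_red [simp]: "red (red w) = red w"
proof (induction w)
  case (Cons x xs)
  show ?case
  proof (cases "red xs")
    case (Cons y ys)
    have "red (y # ys) = y # ys" using Cons.IH Cons by simp
    then show ?thesis using Cons red_Cons_fixed[of y ys] by (simp add: red_Cons)
  qed (simp add: red_Cons)
qed simp

lemma red_cancel: "cancels x y \<Longrightarrow> red (x # y # ys) = red ys"
proof (cases "red ys")
  case (Cons z zs)
  assume xy: "cancels x y"
  have fixed: "red (z # zs) = z # zs" using Cons red_red[of ys] by simp
  then have "red zs = zs" by (rule red_Cons_fixed)
  show ?thesis
  proof (cases "cancels y z")
    case True
    then have "x = z" using xy by (cases x, cases z) (auto simp: cancels_def)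
    then show ?thesis using True Cons xy fixed \<open>red zs = zs\<close> by (simp add: red_Cons)
  qed (use Cons xy in \<open>simp add: red_Cons\<close>)
qed (simp add: red_Cons)

lemma red_cancel_middle: "cancels x y \<Longrightarrow> red (u @ x # y # v) = red (u @ v)"
  by (induction u) (simp_all add: red_cancel red_Cons[of _ "_ @ _"])

lemma red_append_red_right: "red (u @ red v) = red (u @ v)"
  by (induction u) (simp_all add: red_Cons)

lemma red_append_red_left: "red (red u @ v) = red (u @ v)"
proof (induction u)
  case (Cons x u)
  show ?case
  proof (cases "red u")
    case (Cons y ys)
    then show ?thesis using Cons.IH red_cancel[of x y "ys @ v"]
      by (simp add: red_Cons[of x "u @ v"] red_Cons[of x u] red_Cons[of x "y # ys @ v"] flip: Cons.IH)
  qed (simp add: red_Cons flip: Cons.IH)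
qed simp

lemma red_append_red_middle [simp]: "red (u @ red v @ w) = red (u @ v @ w)"
  by (metis red_append_red_left red_append_red_right)

definition letter_inv :: "'a \<times> bool \<Rightarrow> 'a \<times> bool" where
  "letter_inv x = (fst x, \<not> snd x)"

lemma cancels_letter_inv [simp]: "cancels x (letter_inv x)"
  by (simp add: cancels_def letter_inv_def)

lemma winv_eq: "winv w = rev (map letter_inv w)"
  by (simp add: winv_def letter_inv_def case_prod_beta)

lemma winv_Nil [simp]: "winv [] = []"
  by (simp add: winv_def)

lemma winv_Cons: "winv (x # w) = winv w @ [letter_inv x]"
  by (simp add: winv_eq)

lemma fst_set_winv [simp]: "fst ` set (winv w) = fst ` set w"
  by (simp add: winv_eq letter_inv_def image_image)

lemma red_winv_middle: "red (u @ w @ winv w @ v) = red (u @ v)"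
proof (induction w arbitrary: u v)
  case (Cons x w)
  have "red (u @ (x # w) @ winv (x # w) @ v) = red ((u @ [x]) @ w @ winv w @ (letter_inv x # v))"
    by (simp add: winv_Cons)
  also have "\<dots> = red (u @ x # letter_inv x # v)" using Cons.IH[of "u @ [x]" "letter_inv x # v"] by simp
  finally show ?case by (simp add: red_cancel_middle)
qed simp

lemma winv_winv [simp]: "winv (winv w) = w"
  by (simp add: winv_eq rev_map letter_inv_def comp_def)

lemma carrier_free_group: "w \<in> carrier (free_group Y) \<longleftrightarrow> red w = w \<and> fst ` set w \<subseteq> Y"
  by (simp add: free_group_def)

lemma mult_free_group [simp]: "u \<otimes>\<^bsub>free_group Y\<^esub> v = red (u @ v)"
  by (simp add: free_group_def)

lemma one_free_group [simp]: "\<one>\<^bsub>free_group Y\<^esub> = []"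
  by (simp add: free_group_def)

lemma red_in_carrier_free_group: "fst ` set w \<subseteq> Y \<Longrightarrow> red w \<in> carrier (free_group Y)"
  using set_red[of w] by (auto simp: carrier_free_group)

lemma letter_in_carrier_free_group: "y \<in> Y \<Longrightarrow> [(y, b)] \<in> carrier (free_group Y)"
  by (simp add: carrier_free_group red_Cons)

lemma carrier_free_group_mono: "Y \<subseteq> Y' \<Longrightarrow> carrier (free_group Y) \<subseteq> carrier (free_group Y')"
  by (force simp: carrier_free_group)

lemma group_free_group: "group (free_group Y)"
proof (rule groupI)
  fix x assume x: "x \<in> carrier (free_group Y)"
  show "\<exists>y\<in>carrier (free_group Y). y \<otimes>\<^bsub>free_group Y\<^esub> x = \<one>\<^bsub>free_group Y\<^esub>"
  proof
    show "red (winv x) \<in> carrier (free_group Y)"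
      using x by (intro red_in_carrier_free_group) (simp add: carrier_free_group)
    show "red (winv x) \<otimes>\<^bsub>free_group Y\<^esub> x = \<one>\<^bsub>free_group Y\<^esub>"
      using red_winv_middle[of "[]" "winv x" "[]"] by (simp add: red_append_red_left)
  qed
next
  fix x y assume "x \<in> carrier (free_group Y)" "y \<in> carrier (free_group Y)"
  then show "x \<otimes>\<^bsub>free_group Y\<^esub> y \<in> carrier (free_group Y)"
    unfolding mult_free_group by (intro red_in_carrier_free_group) (auto simp: carrier_free_group)
qed (auto simp: carrier_free_group red_append_red_left red_append_red_right)

lemma inv_free_group:
  assumes "w \<in> carrier (free_group Y)" shows "inv\<^bsub>free_group Y\<^esub> w = red (winv w)"
proof (rule group.inv_equality[OF group_free_group])
  show "red (winv w) \<in> carrier (free_group Y)"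
    using assms by (intro red_in_carrier_free_group) (simp add: carrier_free_group)
  show "red (winv w) \<otimes>\<^bsub>free_group Y\<^esub> w = \<one>\<^bsub>free_group Y\<^esub>"
    using red_winv_middle[of "[]" "winv w" "[]"] by (simp add: red_append_red_left)
qed (use assms in simp)

lemma inv_letter_free_group: "y \<in> Y \<Longrightarrow> inv\<^bsub>free_group Y\<^esub> [(y, True)] = [(y, False)]"
  by (simp add: inv_free_group letter_in_carrier_free_group winv_def red_Cons)

lemma hom_free_group_mono:
  assumes "Y \<subseteq> Y'" and h: "h \<in> hom (free_group Y') G" shows "h \<in> hom (free_group Y) G"
proof (rule homI)
  fix x y assume "x \<in> carrier (free_group Y)" "y \<in> carrier (free_group Y)"
  then have "x \<in> carrier (free_group Y')" "y \<in> carrier (free_group Y')"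
    using carrier_free_group_mono[OF assms(1)] by auto
  then show "h x \<in> carrier G" "h (x \<otimes>\<^bsub>free_group Y\<^esub> y) = h x \<otimes>\<^bsub>G\<^esub> h y"
    using hom_mult[OF h] hom_in_carrier[OF h] by auto
qed

lemma free_group_induct [consumes 1, case_names Nil Cons]:
  assumes "w \<in> carrier (free_group Y)" and "P []"
    and "\<And>x w. fst x \<in> Y \<Longrightarrow> w \<in> carrier (free_group Y) \<Longrightarrow> P w \<Longrightarrow> P ([x] \<otimes>\<^bsub>free_group Y\<^esub> w)"
  shows "P w"
  using assms(1)
proof (induction w)
  case (Cons x w)
  then have fixed: "red (x # w) = x # w" and letters: "fst ` set (x # w) \<subseteq> Y"
    by (auto simp: carrier_free_group)
  have "w \<in> carrier (free_group Y)" using red_Cons_fixed[OF fixed] letters by (simp add: carrier_free_group)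
  then show ?case using assms(3)[of x w] Cons.IH letters fixed by (simp add: red_Cons)
qed (use assms(2) in simp)

definition letter_val :: "('b, 'c) monoid_scheme \<Rightarrow> ('a \<Rightarrow> 'b) \<Rightarrow> 'a \<times> bool \<Rightarrow> 'b" where
  "letter_val G f x = (if snd x then f (fst x) else inv\<^bsub>G\<^esub> f (fst x))"

definition free_lift :: "('b, 'c) monoid_scheme \<Rightarrow> ('a \<Rightarrow> 'b) \<Rightarrow> 'a fword \<Rightarrow> 'b" where
  "free_lift G f w = foldr (\<lambda>x acc. letter_val G f x \<otimes>\<^bsub>G\<^esub> acc) w \<one>\<^bsub>G\<^esub>"

context group
begin

lemma free_lift_Nil [simp]: "free_lift G f [] = \<one>"
  by (simp add: free_lift_def)

lemma free_lift_Cons: "free_lift G f (x # w) = letter_val G f x \<otimes> free_lift G f w"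
  by (simp add: free_lift_def)

context
  fixes f Y
  assumes f: "f ` Y \<subseteq> carrier G"
begin

lemma letter_val_closed: "fst x \<in> Y \<Longrightarrow> letter_val G f x \<in> carrier G"
  using f by (auto simp: letter_val_def)

lemma free_lift_closed: "fst ` set w \<subseteq> Y \<Longrightarrow> free_lift G f w \<in> carrier G"
  by (induction w) (auto simp: free_lift_Cons letter_val_closed)

lemma free_lift_append:
  "fst ` set u \<subseteq> Y \<Longrightarrow> fst ` set v \<subseteq> Y \<Longrightarrow> free_lift G f (u @ v) = free_lift G f u \<otimes> free_lift G f v"
  by (induction u) (auto simp: free_lift_Cons letter_val_closed free_lift_closed m_assoc)

lemma free_lift_red: "fst ` set w \<subseteq> Y \<Longrightarrow> free_lift G f (red w) = free_lift G f w"
proof (induction w)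
  case (Cons x w)
  have letters: "fst x \<in> Y" "fst ` set (red w) \<subseteq> Y" using set_red[of w] Cons.prems by auto
  have "free_lift G f (red_cons x (red w)) = letter_val G f x \<otimes> free_lift G f (red w)"
  proof (cases "red w")
    case (Cons y ys)
    moreover have "cancels x y \<Longrightarrow> letter_val G f x \<otimes> letter_val G f y = \<one>"
      using letters f Cons by (cases x; cases y) (auto simp: letter_val_def cancels_def)
    ultimately show ?thesis using letters
      by (auto simp: free_lift_Cons letter_val_closed free_lift_closed simp flip: m_assoc)
  qed (simp add: free_lift_Cons)
  then show ?case using Cons by (simp add: red_Cons free_lift_Cons)
qed simp

lemma free_lift_hom: "free_lift G f \<in> hom (free_group Y) G"
proof (rule homI)
  fix x y assume "x \<in> carrier (free_group Y)" "y \<in> carrier (free_group Y)"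
  then have "fst ` set x \<subseteq> Y" "fst ` set y \<subseteq> Y" "fst ` set (x @ y) \<subseteq> Y"
    by (auto simp: carrier_free_group)
  then show "free_lift G f x \<in> carrier G"
    and "free_lift G f (x \<otimes>\<^bsub>free_group Y\<^esub> y) = free_lift G f x \<otimes> free_lift G f y"
    by (simp_all add: free_lift_closed free_lift_red free_lift_append)
qed

lemma free_lift_letter: "y \<in> Y \<Longrightarrow> free_lift G f [(y, True)] = f y"
  using f by (auto simp: free_lift_Cons letter_val_def)

end

end

lemma free_group_hom_eqI:
  assumes G: "group G" and h1: "h1 \<in> hom (free_group Y) G" and h2: "h2 \<in> hom (free_group Y) G"
    and letters: "\<And>y. y \<in> Y \<Longrightarrow> h1 [(y, True)] = h2 [(y, True)]"
    and w: "w \<in> carrier (free_group Y)"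
  shows "h1 w = h2 w"
  using w
proof (induction rule: free_group_induct)
  case Nil
  then show ?case using hom_one[OF h1 group_free_group G] hom_one[OF h2 group_free_group G] by simp
next
  case (Cons x w)
  obtain y b where x: "x = (y, b)" and y: "y \<in> Y" using Cons(1) by (cases x) auto
  have "h1 [x] = h2 [x]"
  proof (cases b)
    case False
    then have "[x] = inv\<^bsub>free_group Y\<^esub> [(y, True)]" using x y by (simp add: inv_letter_free_group)
    moreover have "group_hom (free_group Y) G h1" "group_hom (free_group Y) G h2"
      using G h1 h2 group_free_group by (simp_all add: group_hom_def group_hom_axioms_def)
    ultimately show ?thesis
      using letters[OF y] letter_in_carrier_free_group[OF y] by (simp add: group_hom.hom_inv)
  qed (use x letters[OF y] in simp)
  then show ?case
    using Cons y x letter_in_carrier_free_group[OF y] by (simp add: hom_mult[OF h1] hom_mult[OF h2] del: mult_free_group)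
qed

section \<open>Commutators and central elements\<close>

definition commutator :: "('a, 'b) monoid_scheme \<Rightarrow> 'a \<Rightarrow> 'a \<Rightarrow> 'a" where
  "commutator G a b = a \<otimes>\<^bsub>G\<^esub> b \<otimes>\<^bsub>G\<^esub> inv\<^bsub>G\<^esub> a \<otimes>\<^bsub>G\<^esub> inv\<^bsub>G\<^esub> b"

definition center :: "('a, 'b) monoid_scheme \<Rightarrow> 'a set" where
  "center G = {z \<in> carrier G. \<forall>a \<in> carrier G. z \<otimes>\<^bsub>G\<^esub> a = a \<otimes>\<^bsub>G\<^esub> z}"

lemma hom_commutator:
  assumes "group G" "group H" "h \<in> hom G H" "a \<in> carrier G" "b \<in> carrier G"
  shows "h (commutator G a b) = commutator H (h a) (h b)"
proof -
  interpret group_hom G H h using assms by (simp add: group_hom_def group_hom_axioms_def)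
  show ?thesis using assms by (simp add: commutator_def)
qed

lemma wcomm_eq_commutator:
  assumes u: "u \<in> carrier (free_group Y)" and v: "v \<in> carrier (free_group Y)"
  shows "wcomm u v = commutator (free_group Y) u v"
  by (simp only: commutator_def inv_free_group[OF u] inv_free_group[OF v] mult_free_group wcomm_def
      red_append_red_left red_append_red_right red_append_red_middle append_assoc)

context group
begin

lemma inv_mult_cancel_left [simp]: "x \<in> carrier G \<Longrightarrow> y \<in> carrier G \<Longrightarrow> inv x \<otimes> (x \<otimes> y) = y"
  by (simp flip: m_assoc)

lemma mult_inv_cancel_left [simp]: "x \<in> carrier G \<Longrightarrow> y \<in> carrier G \<Longrightarrow> x \<otimes> (inv x \<otimes> y) = y"
  by (simp flip: m_assoc)

lemma commutator_closed [simp]: "a \<in> carrier G \<Longrightarrow> b \<in> carrier G \<Longrightarrow> commutator G a b \<in> carrier G"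
  by (simp add: commutator_def)

lemma commutator_eq_one_iff:
  assumes "a \<in> carrier G" "b \<in> carrier G"
  shows "commutator G a b = \<one> \<longleftrightarrow> a \<otimes> b = b \<otimes> a"
proof -
  have "commutator G a b = (a \<otimes> b) \<otimes> inv (b \<otimes> a)"
    using assms by (simp add: commutator_def inv_mult_group m_assoc)
  then show ?thesis using assms inv_solve_right'[of "\<one>" "a \<otimes> b" "b \<otimes> a"] by simp
qed

lemma commutator_swap: "a \<in> carrier G \<Longrightarrow> b \<in> carrier G \<Longrightarrow> commutator G b a = inv (commutator G a b)"
  by (simp add: commutator_def inv_mult_group m_assoc)

lemma center_subset: "center G \<subseteq> carrier G"
  by (auto simp: center_def)

lemma center_commute: "z \<in> center G \<Longrightarrow> a \<in> carrier G \<Longrightarrow> z \<otimes> a = a \<otimes> z"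
  by (simp add: center_def)

lemma centerI: "z \<in> carrier G \<Longrightarrow> (\<And>a. a \<in> carrier G \<Longrightarrow> z \<otimes> a = a \<otimes> z) \<Longrightarrow> z \<in> center G"
  by (simp add: center_def)

lemma subgroup_center: "subgroup (center G) G"
proof (rule subgroupI)
  fix z assume z: "z \<in> center G"
  then have zc: "z \<in> carrier G" using center_subset by blast
  show "inv z \<in> center G"
  proof (rule centerI)
    fix a assume a: "a \<in> carrier G"
    have "z \<otimes> (a \<otimes> inv z) = (a \<otimes> z) \<otimes> inv z"
      using center_commute[OF z a] zc a by (simp flip: m_assoc)
    then have "z \<otimes> (a \<otimes> inv z) = a" using zc a by (simp add: m_assoc)
    then show "inv z \<otimes> a = a \<otimes> inv z" using inv_solve_left'[of "a \<otimes> inv z" z a] zc a by simp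
  qed (use zc in simp)
next
  fix z w assume z: "z \<in> center G" and w: "w \<in> center G"
  then have zc: "z \<in> carrier G" and wc: "w \<in> carrier G" using center_subset by blast+
  show "z \<otimes> w \<in> center G"
  proof (rule centerI)
    fix a assume a: "a \<in> carrier G"
    have "z \<otimes> w \<otimes> a = z \<otimes> (a \<otimes> w)" using center_commute[OF w a] zc wc a by (simp add: m_assoc)
    also have "\<dots> = (a \<otimes> z) \<otimes> w" using center_commute[OF z a] zc wc a by (simp flip: m_assoc)
    finally show "z \<otimes> w \<otimes> a = a \<otimes> (z \<otimes> w)" using zc wc a by (simp add: m_assoc)
  qed (use zc wc in simp)
qed (auto simp: center_def)

lemma int_pow_in_center: "z \<in> center G \<Longrightarrow> z [^] (k::int) \<in> center G"
  by (rule subgroup_int_pow_closed[OF subgroup_center])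

lemma commutator_mult_left:
  assumes a: "a \<in> carrier G" and b: "b \<in> carrier G" and c: "c \<in> carrier G"
    and central: "commutator G c b \<in> center G"
  shows "commutator G (a \<otimes> c) b = commutator G c b \<otimes> commutator G a b"
proof -
  have "commutator G (a \<otimes> c) b = a \<otimes> commutator G c b \<otimes> (b \<otimes> inv a \<otimes> inv b)"
    using a b c by (simp add: commutator_def inv_mult_group m_assoc)
  also have "a \<otimes> commutator G c b = commutator G c b \<otimes> a"
    using center_commute[OF central a] by simp
  finally show ?thesis using a b c by (simp add: commutator_def m_assoc)
qed

lemma commutator_inv_left:
  assumes a: "a \<in> carrier G" and b: "b \<in> carrier G" and central: "commutator G a b \<in> center G"
  shows "commutator G (inv a) b = inv (commutator G a b)"
proof -
  have "inv (commutator G a b) \<in> center G"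
    using central subgroup.m_inv_closed[OF subgroup_center] by blast
  then have "inv a \<otimes> inv (commutator G a b) \<otimes> a = inv (commutator G a b) \<otimes> inv a \<otimes> a"
    using a b by (simp add: center_commute)
  then show ?thesis using a b by (simp add: commutator_def inv_mult_group m_assoc)
qed

text \<open>Commutators with a fixed \<open>b\<close> are multiplicative as long as they are central, so a relation
  \<open>[y, b] = z\<^sup>\<phi>\<^sup>(\<^sup>y\<^sup>)\<close> on the generators propagates to all words.\<close>
lemma commutator_free_hom:
  assumes f: "f \<in> hom (free_group Y) G" and \<phi>: "\<phi> \<in> hom (free_group Y) integer_group"
    and b: "b \<in> carrier G" and z: "z \<in> center G"
    and letters: "\<And>y. y \<in> Y \<Longrightarrow> commutator G (f [(y, True)]) b = z [^] \<phi> [(y, True)]"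
    and w: "w \<in> carrier (free_group Y)"
  shows "commutator G (f w) b = z [^] \<phi> w"
  using w
proof (induction rule: free_group_induct)
  case Nil
  then show ?case
    using hom_one[OF f group_free_group is_group] hom_one[OF \<phi> group_free_group group_integer_group] b
    by (simp add: commutator_def)
next
  case (Cons x w)
  interpret F: group "free_group Y" by (rule group_free_group)
  interpret f: group_hom "free_group Y" G f
    using f by (simp add: group_hom_def group_hom_axioms_def is_group F.is_group)
  interpret \<phi>: group_hom "free_group Y" integer_group \<phi>
    using \<phi> by (simp add: group_hom_def group_hom_axioms_def F.is_group)
  obtain y s where x: "x = (y, s)" and y: "y \<in> Y" using Cons(1) by (cases x) auto
  have yl: "[(y, True)] \<in> carrier (free_group Y)" using y by (rule letter_in_carrier_free_group)
  have xl: "[x] \<in> carrier (free_group Y)" using x y by (simp add: letter_in_carrier_free_group)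
  have zc: "z \<in> carrier G" using z center_subset by blast
  have "commutator G (f [x]) b = z [^] \<phi> [x]"
  proof (cases s)
    case False
    then have inv: "[x] = inv\<^bsub>free_group Y\<^esub> [(y, True)]" using x y by (simp add: inv_letter_free_group)
    have "commutator G (f [x]) b = inv (commutator G (f [(y, True)]) b)"
      unfolding inv using yl b letters[OF y] int_pow_in_center[OF z] by (simp add: commutator_inv_left)
    also have "\<dots> = z [^] \<phi> [x]"
      unfolding inv letters[OF y] using zc yl by (simp add: int_pow_neg)
    finally show ?thesis .
  qed (use x letters[OF y] in simp)
  then show ?case
    using Cons.IH hom_in_carrier[OF f xl] hom_in_carrier[OF f Cons(2)] b zc int_pow_in_center[OF z]
    by (simp add: hom_mult[OF f xl Cons(2)] hom_mult[OF \<phi> xl Cons(2)] commutator_mult_left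
        int_pow_mult add.commute del: mult_free_group)
qed

end

section \<open>Normal closures and presented groups\<close>

context group
begin

lemma normal_closure_normal:
  assumes S: "S \<subseteq> carrier G" shows "normal_closure G S \<lhd> G"
proof -
  let ?T = "{g \<otimes> s \<otimes> inv g | g s. g \<in> carrier G \<and> s \<in> S}"
  have T: "?T \<subseteq> carrier G" using S by blast
  have conj: "x \<otimes> h \<otimes> inv x \<in> generate G ?T" if x: "x \<in> carrier G" and h: "h \<in> generate G ?T" for x h
    using h
  proof (induction rule: generate.induct)
    case (incl t)
    then obtain g s where t: "t = g \<otimes> s \<otimes> inv g" "g \<in> carrier G" "s \<in> S" by blast
    then have "x \<otimes> t \<otimes> inv x = (x \<otimes> g) \<otimes> s \<otimes> inv (x \<otimes> g)"
      using x S by (auto simp: m_assoc inv_mult_group)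
    then show ?case using t x by (auto intro: generate.incl)
  next
    case (inv t)
    then obtain g s where t: "t = g \<otimes> s \<otimes> inv g" "g \<in> carrier G" "s \<in> S" by blast
    then have "x \<otimes> inv t \<otimes> inv x = inv ((x \<otimes> g) \<otimes> s \<otimes> inv (x \<otimes> g))"
      using x S by (auto simp: m_assoc inv_mult_group)
    then show ?case using t x by (auto intro: generate.inv)
  next
    case (eng h1 h2)
    have "h1 \<in> carrier G" "h2 \<in> carrier G" using eng.hyps generate_in_carrier[OF T] by auto
    then have "x \<otimes> (h1 \<otimes> h2) \<otimes> inv x = (x \<otimes> h1 \<otimes> inv x) \<otimes> (x \<otimes> h2 \<otimes> inv x)"
      using x by (simp add: m_assoc)
    then show ?case using eng.IH by (simp add: generate.eng)
  qed (use x in \<open>simp add: generate.one\<close>)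
  show ?thesis
    unfolding normal_closure_def normal_inv_iff using generate_is_subgroup[OF T] conj by blast
qed

lemma subset_normal_closure: "S \<subseteq> carrier G \<Longrightarrow> S \<subseteq> normal_closure G S"
  unfolding normal_closure_def by (force intro: generate.incl)

lemma normal_closure_mono: "S \<subseteq> T \<Longrightarrow> normal_closure G S \<subseteq> normal_closure G T"
  unfolding normal_closure_def by (rule mono_generate) blast

lemma normal_closure_subset_kernel:
  assumes H: "group H" and h: "h \<in> hom G H" and S: "S \<subseteq> carrier G"
    and kills: "\<And>s. s \<in> S \<Longrightarrow> h s = \<one>\<^bsub>H\<^esub>"
  shows "normal_closure G S \<subseteq> kernel G H h"
proof -
  interpret hom: group_hom G H h using H h by (simp add: group_hom_def group_hom_axioms_def is_group)
  show ?thesis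
    unfolding normal_closure_def
  proof (rule generate_subgroup_incl[OF _ hom.subgroup_kernel], safe)
    fix g s assume "g \<in> carrier G" "s \<in> S"
    then show "g \<otimes> s \<otimes> inv g \<in> kernel G H h" using S kills by (auto simp: kernel_def)
  qed
qed

lemma hom_image_normal_closure:
  assumes H: "group H" and h: "h \<in> hom G H" and S: "S \<subseteq> carrier G"
  shows "h ` normal_closure G S \<subseteq> normal_closure H (h ` S)"
proof -
  interpret hom: group_hom G H h using H h by (simp add: group_hom_def group_hom_axioms_def is_group)
  let ?T = "{g \<otimes> s \<otimes> inv g | g s. g \<in> carrier G \<and> s \<in> S}"
  let ?T' = "{g \<otimes>\<^bsub>H\<^esub> s \<otimes>\<^bsub>H\<^esub> inv\<^bsub>H\<^esub> g | g s. g \<in> carrier H \<and> s \<in> h ` S}"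
  have T: "?T \<subseteq> carrier G" using S by blast
  have image: "h t \<in> ?T'" if "t \<in> ?T" for t
  proof -
    obtain g s where "t = g \<otimes> s \<otimes> inv g" "g \<in> carrier G" "s \<in> S" using \<open>t \<in> ?T\<close> by blast
    moreover have "h (g \<otimes> s \<otimes> inv g) = h g \<otimes>\<^bsub>H\<^esub> h s \<otimes>\<^bsub>H\<^esub> inv\<^bsub>H\<^esub> h g"
      using calculation(2,3) S by (simp add: subset_iff)
    ultimately show ?thesis using hom_in_carrier[OF h] by blast
  qed
  have "h n \<in> generate H ?T'" if "n \<in> generate G ?T" for n
    using that
  proof (induction rule: generate.induct)
    case (inv t)
    then have "h (inv t) = inv\<^bsub>H\<^esub> h t" using T by (simp add: subset_iff)
    then show ?case using image[OF inv] by (simp add: generate.inv)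
  next
    case (eng h1 h2)
    have "h1 \<in> carrier G" "h2 \<in> carrier G"
      using eng.hyps generate_in_carrier[OF T] by auto
    then show ?case using eng.IH by (simp add: generate.eng)
  next
    case (incl t)
    then show ?case using image by (blast intro: generate.incl)
  qed (simp add: generate.one)
  then show ?thesis unfolding normal_closure_def by blast
qed

end

lemma FactGroup_lift:
  assumes N: "N \<lhd> G" and H: "group H" and h: "h \<in> hom G H" and ker: "N \<subseteq> kernel G H h"
  obtains h' where "h' \<in> hom (G Mod N) H" and "\<And>a. a \<in> carrier G \<Longrightarrow> h' (N #>\<^bsub>G\<^esub> a) = h a"
proof (rule FactGroup_universal[OF h N])
  interpret N: normal N G by (rule N)
  fix x y assume xy: "x \<in> carrier G" "y \<in> carrier G" "N #>\<^bsub>G\<^esub> x = N #>\<^bsub>G\<^esub> y"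
  then obtain n where n: "n \<in> N" and x: "x = n \<otimes>\<^bsub>G\<^esub> y"
    using N.rcos_self[OF xy(1) N.subgroup_axioms] by (auto simp: r_coset_def)
  have "h n = \<one>\<^bsub>H\<^esub>" using ker n by (auto simp: kernel_def)
  moreover have "n \<in> carrier G" using n N.subset by blast
  ultimately show "h x = h y"
    using x xy(2) hom_in_carrier[OF h xy(2)] by (simp add: hom_mult[OF h] group.is_monoid[OF H])
qed (use that in blast)

lemma rcos_eq_one_FactGroup_iff:
  assumes N: "N \<lhd> G" and a: "a \<in> carrier G"
  shows "N #>\<^bsub>G\<^esub> a = \<one>\<^bsub>G Mod N\<^esub> \<longleftrightarrow> a \<in> N"
proof -
  interpret normal N G by (rule N)
  show ?thesis
    using coset_join1[OF _ a subgroup_axioms] coset_join2[OF a subgroup_axioms] by auto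
qed

context
  fixes Y :: "'a set" and R :: "'a fword set"
  assumes relators: "\<And>r. r \<in> R \<Longrightarrow> fst ` set r \<subseteq> Y"
begin

private abbreviation "relator_closure \<equiv> normal_closure (free_group Y) (red ` R)"

lemma red_relators_in_carrier: "red ` R \<subseteq> carrier (free_group Y)"
  by (rule image_subsetI) (rule red_in_carrier_free_group[OF relators])

lemma relator_closure_normal: "relator_closure \<lhd> free_group Y"
  by (rule group.normal_closure_normal[OF group_free_group red_relators_in_carrier])

lemma group_presented_group: "group (presented_group Y R)"
  unfolding presented_group_def by (rule normal.factorgroup_is_group[OF relator_closure_normal])

lemma pres_class_eq: "w \<in> carrier (free_group Y) \<Longrightarrow> pres_class Y R w = relator_closure #>\<^bsub>free_group Y\<^esub> w"
  by (simp add: pres_class_def carrier_free_group)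

lemma pres_class_hom: "pres_class Y R \<in> hom (free_group Y) (presented_group Y R)"
proof (rule homI)
  interpret F: group "free_group Y" by (rule group_free_group)
  have coset: "(\<lambda>w. relator_closure #>\<^bsub>free_group Y\<^esub> w) \<in> hom (free_group Y) (presented_group Y R)"
    unfolding presented_group_def by (rule normal.r_coset_hom_Mod[OF relator_closure_normal])
  fix x y assume x: "x \<in> carrier (free_group Y)" and y: "y \<in> carrier (free_group Y)"
  show "pres_class Y R x \<in> carrier (presented_group Y R)"
    using hom_in_carrier[OF coset x] by (simp add: pres_class_eq[OF x])
  show "pres_class Y R (x \<otimes>\<^bsub>free_group Y\<^esub> y) = pres_class Y R x \<otimes>\<^bsub>presented_group Y R\<^esub> pres_class Y R y"
    using hom_mult[OF coset x y] by (simp only: pres_class_eq x y F.m_closed)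
qed

lemma carrier_presented_group: "carrier (presented_group Y R) = pres_class Y R ` carrier (free_group Y)"
  unfolding presented_group_def carrier_FactGroup using pres_class_eq by (auto intro!: image_cong)

lemma pres_class_relator: "r \<in> R \<Longrightarrow> pres_class Y R r = \<one>\<^bsub>presented_group Y R\<^esub>"
proof -
  assume r: "r \<in> R"
  have "red r \<in> carrier (free_group Y)" using red_relators_in_carrier r by blast
  moreover have "red r \<in> relator_closure"
    using group.subset_normal_closure[OF group_free_group red_relators_in_carrier] r by blast
  ultimately show ?thesis
    using rcos_eq_one_FactGroup_iff[OF relator_closure_normal]
    by (simp add: pres_class_def presented_group_def)
qed

lemma pres_class_letters_in_carrier:
  "(\<lambda>y. pres_class Y R [(y, True)]) ` Y \<subseteq> carrier (presented_group Y R)"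
  by (rule image_subsetI) (rule hom_in_carrier[OF pres_class_hom letter_in_carrier_free_group])

lemma free_lift_pres_class:
  "w \<in> carrier (free_group Y) \<Longrightarrow>
     free_lift (presented_group Y R) (\<lambda>y. pres_class Y R [(y, True)]) w = pres_class Y R w"
  by (rule free_group_hom_eqI[OF group_presented_group _ pres_class_hom])
    (simp_all add: group.free_lift_hom[OF group_presented_group pres_class_letters_in_carrier]
      group.free_lift_letter[OF group_presented_group pres_class_letters_in_carrier])

lemma free_lift_relator_presented_group:
  assumes r: "r \<in> R"
  shows "free_lift (presented_group Y R) (\<lambda>y. pres_class Y R [(y, True)]) r = \<one>\<^bsub>presented_group Y R\<^esub>"
proof -
  have "free_lift (presented_group Y R) (\<lambda>y. pres_class Y R [(y, True)]) r =
      free_lift (presented_group Y R) (\<lambda>y. pres_class Y R [(y, True)]) (red r)"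
    using group.free_lift_red[OF group_presented_group pres_class_letters_in_carrier relators[OF r]] ..
  also have "\<dots> = pres_class Y R (red r)"
    using red_relators_in_carrier r by (intro free_lift_pres_class) blast
  also have "\<dots> = \<one>\<^bsub>presented_group Y R\<^esub>"
    using pres_class_relator[OF r] by (simp add: pres_class_def)
  finally show ?thesis .
qed

lemma presented_group_lift:
  assumes G: "group G" and f: "f ` Y \<subseteq> carrier G"
    and kills: "\<And>r. r \<in> R \<Longrightarrow> free_lift G f r = \<one>\<^bsub>G\<^esub>"
  obtains h where "h \<in> hom (presented_group Y R) G"
    and "\<And>w. w \<in> carrier (free_group Y) \<Longrightarrow> h (pres_class Y R w) = free_lift G f w"
proof -
  have lift: "free_lift G f \<in> hom (free_group Y) G" by (rule group.free_lift_hom[OF G f])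
  have kernel: "relator_closure \<subseteq> kernel (free_group Y) G (free_lift G f)"
  proof (rule group.normal_closure_subset_kernel[OF group_free_group G lift red_relators_in_carrier])
    fix s assume "s \<in> red ` R"
    then obtain r where "r \<in> R" "s = red r" by blast
    then show "free_lift G f s = \<one>\<^bsub>G\<^esub>"
      using kills group.free_lift_red[OF G f relators] by simp
  qed
  obtain h where h: "h \<in> hom (free_group Y Mod relator_closure) G"
    and h_coset: "\<And>w. w \<in> carrier (free_group Y) \<Longrightarrow> h (relator_closure #>\<^bsub>free_group Y\<^esub> w) = free_lift G f w"
    using FactGroup_lift[OF relator_closure_normal G lift kernel] by blast
  show ?thesis
  proof (rule that)
    show "h \<in> hom (presented_group Y R) G" using h by (simp add: presented_group_def)
    show "h (pres_class Y R w) = free_lift G f w" if "w \<in> carrier (free_group Y)" for w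
      using h_coset[OF that] pres_class_eq[OF that] by simp
  qed
qed

end

section \<open>The intersection form\<close>

lemma expsum_append: "expsum (u @ v) x = expsum u x + expsum v x"
  by (simp add: expsum_def)

lemma expsum_letter: "expsum [(y, b)] x = (if y = x then (if b then 1 else -1) else 0)"
  by (simp add: expsum_def)

lemma expsum_Cons: "expsum (l # w) x = (if fst l = x then (if snd l then 1 else -1) else 0) + expsum w x"
  by (simp add: expsum_def)

lemma expsum_red_cons: "expsum (red_cons l r) x = expsum (l # r) x"
  by (cases r) (auto simp: expsum_Cons cancels_def)

lemma expsum_red: "expsum (red w) x = expsum w x"
  by (induction w) (simp_all add: red_Cons expsum_red_cons expsum_Cons)

lemma expsum_hom: "(\<lambda>w. expsum w x) \<in> hom (free_group Y) integer_group"
  by (rule homI) (simp_all add: expsum_red expsum_append)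

lemma omega_hom_left: "(\<lambda>u. omega g u v) \<in> hom (free_group Y) integer_group"
proof (rule homI)
  fix x y
  show "omega g (x \<otimes>\<^bsub>free_group Y\<^esub> y) v = omega g x v \<otimes>\<^bsub>integer_group\<^esub> omega g y v"
    unfolding omega_def mult_integer_group mult_free_group expsum_red expsum_append sum.distrib[symmetric]
    by (rule sum.cong) (simp_all add: algebra_simps)
qed simp

lemma omega_antisym: "omega g u v = - omega g v u"
  by (simp add: omega_def sum_negf[symmetric] mult.commute)

lemma omega_hom_right: "(\<lambda>v. omega g u v) \<in> hom (free_group Y) integer_group"
proof -
  have "(\<lambda>v. - omega g v u) \<in> hom (free_group Y) integer_group"
    using hom_compose[OF omega_hom_left[of g u] group.hom_integer_group_pow[OF group_integer_group, of "-1"]]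
    by (simp add: comp_def)
  then show ?thesis by (simp flip: omega_antisym)
qed

lemma omega_lett_A:
  assumes k: "k \<in> {1..g}" shows "omega g (lett (A k)) (lett q) = (if q = B k then 1 else 0)"
proof -
  have "omega g (lett (A k)) (lett q) = (\<Sum>i\<in>{1..g}. if i = k then (if q = B k then 1 else 0) else 0)"
    unfolding omega_def lett_def expsum_letter by (rule sum.cong) auto
  then show ?thesis using k by simp
qed

lemma omega_lett_B:
  assumes k: "k \<in> {1..g}" shows "omega g (lett (B k)) (lett q) = (if q = A k then -1 else 0)"
proof -
  have "omega g (lett (B k)) (lett q) = (\<Sum>i\<in>{1..g}. if i = k then (if q = A k then -1 else 0) else 0)"
    unfolding omega_def lett_def expsum_letter by (rule sum.cong) auto
  then show ?thesis using k by simp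
qed

section \<open>The presentation of \<open>\<bbbH>\<^sub>g\<close>\<close>

lemma surf_gens_eq: "surf_gens g = A ` {1..g} \<union> B ` {1..g}"
  by (auto simp: surf_gens_def)

lemma finite_surf_gens: "finite (surf_gens g)"
  by (simp add: surf_gens_eq)

lemma A_in_surf_gens: "i \<in> {1..g} \<Longrightarrow> A i \<in> surf_gens g"
  and B_in_surf_gens: "i \<in> {1..g} \<Longrightarrow> B i \<in> surf_gens g"
  and Sig_notin_surf_gens: "Sig \<notin> surf_gens g"
  and surf_gens_subset_Hg_gens: "surf_gens g \<subseteq> Hg_gens g"
  and Sig_in_Hg_gens: "Sig \<in> Hg_gens g"
  by (auto simp: surf_gens_def Hg_gens_def)

lemma surf_gensE:
  assumes "x \<in> surf_gens g"
  obtains i where "i \<in> {1..g}" "x = A i" | i where "i \<in> {1..g}" "x = B i"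
  using assms by (auto simp: surf_gens_def)

lemma Hg_gens_cases: "x \<in> Hg_gens g \<Longrightarrow> x = Sig \<or> x \<in> surf_gens g"
  by (auto simp: Hg_gens_def)

lemma lett_in_pi1: "x \<in> surf_gens g \<Longrightarrow> lett x \<in> carrier (pi1 g)"
  by (simp add: pi1_def lett_def letter_in_carrier_free_group)

lemma group_pi1: "group (pi1 g)"
  by (simp add: pi1_def group_free_group)

lemma wcomm_lett: "wcomm (lett x) (lett y) = red [(x, True), (y, True), (x, False), (y, False)]"
  by (simp add: wcomm_def lett_def winv_def)

lemma Hg_rels_letters: "r \<in> Hg_rels g \<Longrightarrow> fst ` set r \<subseteq> Hg_gens g"
  using set_red[of "[(_, True), (_, True), (_, False), (_, False)]"]
  by (fastforce simp: Hg_rels_def wcomm_lett Hg_gens_def surf_gens_def)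

lemma wcomm_AA_in_Hg_rels: "i \<in> {1..g} \<Longrightarrow> j \<in> {1..g} \<Longrightarrow> wcomm (lett (A i)) (lett (A j)) \<in> Hg_rels g"
  and wcomm_BB_in_Hg_rels: "i \<in> {1..g} \<Longrightarrow> j \<in> {1..g} \<Longrightarrow> wcomm (lett (B i)) (lett (B j)) \<in> Hg_rels g"
  and wcomm_SA_in_Hg_rels: "i \<in> {1..g} \<Longrightarrow> wcomm (lett Sig) (lett (A i)) \<in> Hg_rels g"
  and wcomm_SB_in_Hg_rels: "i \<in> {1..g} \<Longrightarrow> wcomm (lett Sig) (lett (B i)) \<in> Hg_rels g"
  and wcomm_AB_in_Hg_rels: "i \<in> {1..g} \<Longrightarrow> j \<in> {1..g} \<Longrightarrow>
     wcomm (lett (A i)) (lett (B j)) @ (if i = j then [(Sig, False), (Sig, False)] else []) \<in> Hg_rels g"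
  unfolding Hg_rels_def by blast+

lemma omega_lett_AA: "i \<in> {1..g} \<Longrightarrow> omega g (lett (A i)) (lett (A j)) = 0"
  and omega_lett_BB: "i \<in> {1..g} \<Longrightarrow> omega g (lett (B i)) (lett (B j)) = 0"
  by (simp_all add: omega_lett_A omega_lett_B)

context group
begin

context
  fixes f and g :: nat
  assumes f: "f ` Hg_gens g \<subseteq> carrier G"
begin

lemma free_lift_wcomm_lett:
  assumes "x \<in> Hg_gens g" "y \<in> Hg_gens g"
  shows "free_lift G f (wcomm (lett x) (lett y)) = commutator G (f x) (f y)"
proof -
  have "f x \<in> carrier G" "f y \<in> carrier G" using f assms by auto
  then show ?thesis
    using assms unfolding wcomm_lett
    by (simp add: free_lift_red[OF f] free_lift_Cons letter_val_def commutator_def m_assoc)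
qed

lemma free_lift_Hg_rel_AB:
  assumes i: "i \<in> {1..g}" and j: "j \<in> {1..g}"
  shows "free_lift G f (wcomm (lett (A i)) (lett (B j)) @ (if i = j then [(Sig, False), (Sig, False)] else [])) = \<one>
    \<longleftrightarrow> commutator G (f (A i)) (f (B j)) = f Sig [^] (2 * omega g (lett (A i)) (lett (B j)))"
proof -
  have gens: "A i \<in> Hg_gens g" "B j \<in> Hg_gens g"
    using A_in_surf_gens[OF i] B_in_surf_gens[OF j] surf_gens_subset_Hg_gens by auto
  let ?c = "commutator G (f (A i)) (f (B j))"
  have c: "?c \<in> carrier G" "f Sig \<in> carrier G" using f gens Sig_in_Hg_gens by (auto simp: image_subset_iff)
  have "free_lift G f (wcomm (lett (A i)) (lett (B j)) @ (if i = j then [(Sig, False), (Sig, False)] else []))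
      = ?c \<otimes> inv (f Sig [^] (2 * omega g (lett (A i)) (lett (B j))))"
  proof (cases "i = j")
    case True
    have "f Sig [^] (2::int) = f Sig \<otimes> f Sig" using c int_pow_mult[of "f Sig" 1 1] by simp
    moreover have "fst ` set (wcomm (lett (A i)) (lett (B j))) \<subseteq> Hg_gens g"
      using Hg_rels_letters[OF wcomm_AB_in_Hg_rels[OF i j]] True by simp
    ultimately show ?thesis
      using True i c free_lift_wcomm_lett[OF gens] Sig_in_Hg_gens
      by (simp add: free_lift_append[OF f] free_lift_Cons letter_val_def omega_lett_A inv_mult_group m_assoc)
  qed (use i c free_lift_wcomm_lett[OF gens] in \<open>simp add: omega_lett_A\<close>)
  then show ?thesis using c inv_solve_right'[of "\<one>" ?c] by simp
qed

context
  assumes rels: "\<And>r. r \<in> Hg_rels g \<Longrightarrow> free_lift G f r = \<one>"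
begin

lemma Hg_rels_imp_Sig_commutator:
  assumes "x \<in> surf_gens g" shows "commutator G (f Sig) (f x) = \<one>"
proof -
  have "wcomm (lett Sig) (lett x) \<in> Hg_rels g"
    using assms by (cases rule: surf_gensE) (simp_all add: wcomm_SA_in_Hg_rels wcomm_SB_in_Hg_rels)
  moreover have "x \<in> Hg_gens g" using assms surf_gens_subset_Hg_gens by blast
  ultimately show ?thesis using rels free_lift_wcomm_lett[OF Sig_in_Hg_gens] by metis
qed

lemma Hg_rels_imp_commutator:
  assumes x: "x \<in> surf_gens g" and y: "y \<in> surf_gens g"
  shows "commutator G (f x) (f y) = f Sig [^] (2 * omega g (lett x) (lett y))"
proof -
  have gen: "z \<in> Hg_gens g" if "z \<in> surf_gens g" for z using that surf_gens_subset_Hg_gens by blast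
  note A = gen[OF A_in_surf_gens] and B = gen[OF B_in_surf_gens]
  have AB: "commutator G (f (A i)) (f (B j)) = f Sig [^] (2 * omega g (lett (A i)) (lett (B j)))"
    if "i \<in> {1..g}" "j \<in> {1..g}" for i j
    using free_lift_Hg_rel_AB[OF that] rels[OF wcomm_AB_in_Hg_rels[OF that]] by simp
  show ?thesis
  proof (cases rule: surf_gensE[OF x]; cases rule: surf_gensE[OF y])
    fix i j assume "i \<in> {1..g}" "x = A i" "j \<in> {1..g}" "y = A j"
    then show ?thesis
      using rels[OF wcomm_AA_in_Hg_rels] free_lift_wcomm_lett[OF A A] by (simp add: omega_lett_AA)
  next
    fix i j assume "i \<in> {1..g}" "x = A i" "j \<in> {1..g}" "y = B j"
    then show ?thesis using AB by simp
  next
    fix i j assume ij: "i \<in> {1..g}" "x = B i" "j \<in> {1..g}" "y = A j"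
    then show ?thesis
      using AB[of j i] f A B Sig_in_Hg_gens omega_antisym[of g "lett (B i)" "lett (A j)"]
        commutator_swap[of "f (A j)" "f (B i)"]
      by (simp add: int_pow_neg image_subset_iff)
  next
    fix i j assume "i \<in> {1..g}" "x = B i" "j \<in> {1..g}" "y = B j"
    then show ?thesis
      using rels[OF wcomm_BB_in_Hg_rels] free_lift_wcomm_lett[OF B B] by (simp add: omega_lett_BB)
  qed
qed

end

lemma Hg_relsI:
  assumes central: "\<And>x. x \<in> surf_gens g \<Longrightarrow> commutator G (f Sig) (f x) = \<one>"
    and commutators: "\<And>x y. x \<in> surf_gens g \<Longrightarrow> y \<in> surf_gens g \<Longrightarrow>
      commutator G (f x) (f y) = f Sig [^] (2 * omega g (lett x) (lett y))"
    and r: "r \<in> Hg_rels g"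
  shows "free_lift G f r = \<one>"
proof -
  have gen: "z \<in> Hg_gens g" if "z \<in> surf_gens g" for z using that surf_gens_subset_Hg_gens by blast
  note A = gen[OF A_in_surf_gens] and B = gen[OF B_in_surf_gens]
  show ?thesis
    using r unfolding Hg_rels_def
  proof (elim UnE CollectE exE conjE)
    fix i j assume "r = wcomm (lett (A i)) (lett (A j))" "i \<in> {1..g}" "j \<in> {1..g}"
    then show ?thesis using commutators free_lift_wcomm_lett[OF A A] A_in_surf_gens by (simp add: omega_lett_AA)
  next
    fix i j assume "r = wcomm (lett (B i)) (lett (B j))" "i \<in> {1..g}" "j \<in> {1..g}"
    then show ?thesis using commutators free_lift_wcomm_lett[OF B B] B_in_surf_gens by (simp add: omega_lett_BB)
  next
    fix i assume "r = wcomm (lett Sig) (lett (A i))" "i \<in> {1..g}"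
    then show ?thesis using central free_lift_wcomm_lett[OF Sig_in_Hg_gens A] A_in_surf_gens by simp
  next
    fix i assume "r = wcomm (lett Sig) (lett (B i))" "i \<in> {1..g}"
    then show ?thesis using central free_lift_wcomm_lett[OF Sig_in_Hg_gens B] B_in_surf_gens by simp
  next
    fix i j assume "r = wcomm (lett (A i)) (lett (B j)) @ (if i = j then [(Sig, False), (Sig, False)] else [])"
      "i \<in> {1..g}" "j \<in> {1..g}"
    then show ?thesis using free_lift_Hg_rel_AB commutators A_in_surf_gens B_in_surf_gens by simp
  qed
qed

end

end

lemma hom_integer_group_scale:
  "\<phi> \<in> hom G integer_group \<Longrightarrow> (\<lambda>x. c * \<phi> x) \<in> hom G integer_group"
  by (auto simp: hom_def ring_distribs)

lemma group_Hgrp: "group (Hgrp g)"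
  unfolding Hgrp_def by (rule group_presented_group[OF Hg_rels_letters])

lemma Hclass_hom: "Hclass g \<in> hom (free_group (Hg_gens g)) (Hgrp g)"
  unfolding Hclass_def[abs_def] Hgrp_def by (rule pres_class_hom[OF Hg_rels_letters])

lemma Hclass_hom_pi1: "Hclass g \<in> hom (pi1 g) (Hgrp g)"
  unfolding pi1_def by (rule hom_free_group_mono[OF surf_gens_subset_Hg_gens Hclass_hom])

lemma carrier_Hgrp: "carrier (Hgrp g) = Hclass g ` carrier (free_group (Hg_gens g))"
  unfolding Hgrp_def Hclass_def[abs_def] by (rule carrier_presented_group[OF Hg_rels_letters])

lemma Hclass_lett_in_carrier: "x \<in> Hg_gens g \<Longrightarrow> Hclass g (lett x) \<in> carrier (Hgrp g)"
  unfolding lett_def by (rule hom_in_carrier[OF Hclass_hom letter_in_carrier_free_group])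

lemma Hgrp_lift:
  assumes "group G" and "f ` Hg_gens g \<subseteq> carrier G"
    and "\<And>r. r \<in> Hg_rels g \<Longrightarrow> free_lift G f r = \<one>\<^bsub>G\<^esub>"
  obtains h where "h \<in> hom (Hgrp g) G"
    and "\<And>w. w \<in> carrier (free_group (Hg_gens g)) \<Longrightarrow> h (Hclass g w) = free_lift G f w"
proof (rule presented_group_lift[OF Hg_rels_letters assms])
  fix h assume "h \<in> hom (presented_group (Hg_gens g) (Hg_rels g)) G"
    and "\<And>w. w \<in> carrier (free_group (Hg_gens g)) \<Longrightarrow> h (pres_class (Hg_gens g) (Hg_rels g) w) = free_lift G f w"
  then show ?thesis by (intro that) (auto simp: Hgrp_def Hclass_def)
qed

lemma Hgrp_rels: "r \<in> Hg_rels g \<Longrightarrow> free_lift (Hgrp g) (\<lambda>y. Hclass g (lett y)) r = \<one>\<^bsub>Hgrp g\<^esub>"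
  unfolding Hgrp_def Hclass_def lett_def by (rule free_lift_relator_presented_group[OF Hg_rels_letters])

lemma Hclass_lett_image: "(\<lambda>y. Hclass g (lett y)) ` Hg_gens g \<subseteq> carrier (Hgrp g)"
  using Hclass_lett_in_carrier by blast

lemma commutator_Sig_Hclass_lett:
  "x \<in> surf_gens g \<Longrightarrow> commutator (Hgrp g) (Hclass g (lett Sig)) (Hclass g (lett x)) = \<one>\<^bsub>Hgrp g\<^esub>"
  by (rule group.Hg_rels_imp_Sig_commutator[OF group_Hgrp Hclass_lett_image]) (erule Hgrp_rels)

lemma commutator_Hclass_lett:
  "x \<in> surf_gens g \<Longrightarrow> y \<in> surf_gens g \<Longrightarrow>
    commutator (Hgrp g) (Hclass g (lett x)) (Hclass g (lett y)) =
    Hclass g (lett Sig) [^]\<^bsub>Hgrp g\<^esub> (2 * omega g (lett x) (lett y))"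
  by (rule group.Hg_rels_imp_commutator[OF group_Hgrp Hclass_lett_image]) (erule Hgrp_rels)

lemma Hclass_Sig_in_center: "Hclass g (lett Sig) \<in> center (Hgrp g)"
proof -
  interpret H: group "Hgrp g" by (rule group_Hgrp)
  let ?\<sigma> = "Hclass g (lett Sig)"
  have \<sigma>: "?\<sigma> \<in> carrier (Hgrp g)" by (rule Hclass_lett_in_carrier[OF Sig_in_Hg_gens])
  have zero: "(\<lambda>_. 0::int) \<in> hom (free_group (Hg_gens g)) integer_group" by (rule homI) simp_all
  have letters: "commutator (Hgrp g) (Hclass g [(y, True)]) ?\<sigma> = \<one>\<^bsub>Hgrp g\<^esub> [^]\<^bsub>Hgrp g\<^esub> (0::int)"
    if "y \<in> Hg_gens g" for y
  proof (cases "y = Sig")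
    case False
    then have "y \<in> surf_gens g" using that Hg_gens_cases by blast
    then have "commutator (Hgrp g) ?\<sigma> (Hclass g (lett y)) = \<one>\<^bsub>Hgrp g\<^esub>"
      by (rule commutator_Sig_Hclass_lett)
    then show ?thesis
      using H.commutator_swap[OF \<sigma> Hclass_lett_in_carrier[OF that]] by (simp add: lett_def)
  qed (use \<sigma> H.commutator_eq_one_iff in \<open>simp add: lett_def\<close>)
  show ?thesis
  proof (rule H.centerI[OF \<sigma>])
    fix Z assume "Z \<in> carrier (Hgrp g)"
    then obtain w where w: "w \<in> carrier (free_group (Hg_gens g))" and Z: "Z = Hclass g w"
      unfolding carrier_Hgrp by blast
    have "commutator (Hgrp g) Z ?\<sigma> = \<one>\<^bsub>Hgrp g\<^esub>"
      using H.commutator_free_hom[OF Hclass_hom zero \<sigma> H.subgroup_center[THEN subgroup.one_closed] letters w]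
      by (simp add: Z)
    then show "?\<sigma> \<otimes>\<^bsub>Hgrp g\<^esub> Z = Z \<otimes>\<^bsub>Hgrp g\<^esub> ?\<sigma>"
      using H.commutator_eq_one_iff \<sigma> \<open>Z \<in> carrier (Hgrp g)\<close> by simp
  qed
qed

lemma commutator_Hclass:
  assumes u: "u \<in> carrier (pi1 g)" and v: "v \<in> carrier (pi1 g)"
  shows "commutator (Hgrp g) (Hclass g u) (Hclass g v) = Hclass g (lett Sig) [^]\<^bsub>Hgrp g\<^esub> (2 * omega g u v)"
proof -
  interpret H: group "Hgrp g" by (rule group_Hgrp)
  let ?\<sigma> = "Hclass g (lett Sig)"
  have \<sigma>: "?\<sigma> \<in> center (Hgrp g)" by (rule Hclass_Sig_in_center)
  have hom: "Hclass g \<in> hom (free_group (surf_gens g)) (Hgrp g)"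
    using Hclass_hom_pi1 by (simp add: pi1_def)
  have in_carrier: "Hclass g w \<in> carrier (Hgrp g)" if "w \<in> carrier (pi1 g)" for w
    using hom_in_carrier[OF Hclass_hom_pi1 that] .
  have gen: "commutator (Hgrp g) (Hclass g u) (Hclass g (lett y)) = ?\<sigma> [^]\<^bsub>Hgrp g\<^esub> (2 * omega g u (lett y))"
    if y: "y \<in> surf_gens g" and u: "u \<in> carrier (pi1 g)" for u y
  proof (rule H.commutator_free_hom[OF hom hom_integer_group_scale[OF omega_hom_left] _ \<sigma> _ u[unfolded pi1_def]])
    show "Hclass g (lett y) \<in> carrier (Hgrp g)" using in_carrier[OF lett_in_pi1[OF y]] .
    show "commutator (Hgrp g) (Hclass g [(x, True)]) (Hclass g (lett y)) =
        ?\<sigma> [^]\<^bsub>Hgrp g\<^esub> (2 * omega g [(x, True)] (lett y))" if "x \<in> surf_gens g" for x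
      using commutator_Hclass_lett[OF that y] by (simp add: lett_def)
  qed
  have "commutator (Hgrp g) (Hclass g v) (Hclass g u) = ?\<sigma> [^]\<^bsub>Hgrp g\<^esub> (2 * omega g v u)"
  proof (rule H.commutator_free_hom[OF hom hom_integer_group_scale[OF omega_hom_left] in_carrier[OF u] \<sigma> _ v[unfolded pi1_def]])
    fix y assume y: "y \<in> surf_gens g"
    have "commutator (Hgrp g) (Hclass g (lett y)) (Hclass g u) = inv\<^bsub>Hgrp g\<^esub> (?\<sigma> [^]\<^bsub>Hgrp g\<^esub> (2 * omega g u (lett y)))"
      using H.commutator_swap[OF in_carrier[OF u] in_carrier[OF lett_in_pi1[OF y]]] gen[OF y u] by simp
    then show "commutator (Hgrp g) (Hclass g [(y, True)]) (Hclass g u) = ?\<sigma> [^]\<^bsub>Hgrp g\<^esub> (2 * omega g [(y, True)] u)"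
      using H.center_subset \<sigma> omega_antisym[of g u] by (auto simp: H.int_pow_neg lett_def)
  qed
  then show ?thesis
    using H.commutator_swap[OF in_carrier[OF v] in_carrier[OF u]] H.center_subset \<sigma> omega_antisym[of g v u]
    by (auto simp: H.int_pow_neg)
qed

section \<open>The quotient of \<open>\<pi>\<^sub>1 \<times> \<langle>\<sigma>\<rangle>\<close>\<close>

lemma group_PxS: "group (PxS g)"
  by (simp add: PxS_def DirProd_group group_pi1)

lemma carrier_PxS: "carrier (PxS g) = carrier (pi1 g) \<times> UNIV"
  by (simp add: PxS_def)

lemma mult_PxS: "(u, a) \<otimes>\<^bsub>PxS g\<^esub> (v, b) = (u \<otimes>\<^bsub>pi1 g\<^esub> v, a + b)"
  by (simp add: PxS_def)

lemma commutator_PxS: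
  assumes "u \<in> carrier (pi1 g)" "v \<in> carrier (pi1 g)"
  shows "commutator (PxS g) (u, a) (v, b) = (wcomm u v, 0)"
  using assms wcomm_eq_commutator[of u "surf_gens g" v]
  by (simp add: PxS_def commutator_def group_free_group pi1_def)

lemma wcomm_in_pi1: "u \<in> carrier (pi1 g) \<Longrightarrow> v \<in> carrier (pi1 g) \<Longrightarrow> wcomm u v \<in> carrier (pi1 g)"
  using wcomm_eq_commutator[of u "surf_gens g" v] group.commutator_closed[OF group_pi1]
  by (simp add: pi1_def)

lemma Qrel_subset_carrier: "Qrel g \<subseteq> carrier (PxS g)"
  by (auto simp: Qrel_def carrier_PxS wcomm_in_pi1)

lemma Qrel_closure_normal: "normal_closure (PxS g) (Qrel g) \<lhd> PxS g"
  by (rule group.normal_closure_normal[OF group_PxS Qrel_subset_carrier])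

lemma group_Qgrp: "group (Qgrp g)"
  unfolding Qgrp_def by (rule normal.factorgroup_is_group[OF Qrel_closure_normal])

lemma Qclass_hom: "Qclass g \<in> hom (PxS g) (Qgrp g)"
  unfolding Qclass_def[abs_def] Qgrp_def by (rule normal.r_coset_hom_Mod[OF Qrel_closure_normal])

lemma carrier_Qgrp: "carrier (Qgrp g) = Qclass g ` carrier (PxS g)"
  by (simp add: Qgrp_def Qclass_def[abs_def] carrier_FactGroup)

lemma Qclass_eq_one_iff:
  "x \<in> carrier (PxS g) \<Longrightarrow> Qclass g x = \<one>\<^bsub>Qgrp g\<^esub> \<longleftrightarrow> x \<in> normal_closure (PxS g) (Qrel g)"
  unfolding Qclass_def Qgrp_def by (rule rcos_eq_one_FactGroup_iff[OF Qrel_closure_normal])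

lemma Qclass_Sig_pow: "Qclass g ([], k) = Qclass g ([], 1) [^]\<^bsub>Qgrp g\<^esub> k"
proof -
  have "(\<lambda>k. ([], k)) \<in> hom integer_group (PxS g)"
    by (rule homI) (simp_all add: carrier_PxS mult_PxS pi1_def carrier_free_group)
  then have hom: "(\<lambda>k. Qclass g ([], k)) \<in> hom integer_group (Qgrp g)"
    using hom_compose[OF _ Qclass_hom] by (simp add: comp_def)
  have "Qclass g ([], 1 [^]\<^bsub>integer_group\<^esub> k) = Qclass g ([], 1) [^]\<^bsub>Qgrp g\<^esub> k"
    by (rule hom_int_pow[OF hom]) (simp_all add: group_Qgrp)
  then show ?thesis by simp
qed

lemma Qclass_split:
  assumes "w \<in> carrier (pi1 g)"
  shows "Qclass g (w, k) = Qclass g (w, 0) \<otimes>\<^bsub>Qgrp g\<^esub> Qclass g ([], 1) [^]\<^bsub>Qgrp g\<^esub> k"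
proof -
  have "(w, k) = (w, 0) \<otimes>\<^bsub>PxS g\<^esub> ([], k)"
    using assms by (simp add: mult_PxS pi1_def carrier_free_group)
  then show ?thesis
    using assms Qclass_Sig_pow[of g k]
    by (simp add: hom_mult[OF Qclass_hom] carrier_PxS pi1_def carrier_free_group)
qed

lemma Qclass_Sig_in_center: "Qclass g ([], 1) \<in> center (Qgrp g)"
proof (rule group.centerI[OF group_Qgrp])
  show \<sigma>: "Qclass g ([], 1) \<in> carrier (Qgrp g)"
    by (rule hom_in_carrier[OF Qclass_hom]) (simp add: carrier_PxS pi1_def carrier_free_group)
  fix Z assume "Z \<in> carrier (Qgrp g)"
  then obtain w k where w: "w \<in> carrier (pi1 g)" and Z: "Z = Qclass g (w, k)"
    unfolding carrier_Qgrp carrier_PxS by blast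
  have "([], 1) \<otimes>\<^bsub>PxS g\<^esub> (w, k) = (w, k) \<otimes>\<^bsub>PxS g\<^esub> ([], 1)"
    using w by (simp add: mult_PxS pi1_def carrier_free_group add.commute)
  then show "Qclass g ([], 1) \<otimes>\<^bsub>Qgrp g\<^esub> Z = Z \<otimes>\<^bsub>Qgrp g\<^esub> Qclass g ([], 1)"
    using w by (simp add: Z carrier_PxS pi1_def carrier_free_group flip: hom_mult[OF Qclass_hom])
qed

lemma commutator_Qclass:
  assumes u: "u \<in> carrier (pi1 g)" and v: "v \<in> carrier (pi1 g)"
  shows "commutator (Qgrp g) (Qclass g (u, 0)) (Qclass g (v, 0)) = Qclass g ([], 2 * omega g u v)"
proof -
  have c: "(u, 0) \<in> carrier (PxS g)" "(v, 0) \<in> carrier (PxS g)" "(wcomm u v, - 2 * omega g u v) \<in> carrier (PxS g)"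
    "([], 2 * omega g u v) \<in> carrier (PxS g)"
    using u v wcomm_in_pi1[OF u v] by (simp_all add: carrier_PxS pi1_def carrier_free_group)
  have rel: "Qclass g (wcomm u v, - 2 * omega g u v) = \<one>\<^bsub>Qgrp g\<^esub>"
    using Qclass_eq_one_iff[OF c(3)] group.subset_normal_closure[OF group_PxS Qrel_subset_carrier] u v
    by (auto simp: Qrel_def)
  have "commutator (Qgrp g) (Qclass g (u, 0)) (Qclass g (v, 0)) = Qclass g (wcomm u v, 0)"
    using hom_commutator[OF group_PxS group_Qgrp Qclass_hom c(1,2)] commutator_PxS[OF u v] by simp
  also have "(wcomm u v, 0) = (wcomm u v, - 2 * omega g u v) \<otimes>\<^bsub>PxS g\<^esub> ([], 2 * omega g u v)"
    using wcomm_in_pi1[OF u v] by (simp add: mult_PxS pi1_def carrier_free_group)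
  also have "Qclass g \<dots> = Qclass g (wcomm u v, - 2 * omega g u v) \<otimes>\<^bsub>Qgrp g\<^esub> Qclass g ([], 2 * omega g u v)"
    by (rule hom_mult[OF Qclass_hom c(3,4)])
  finally show ?thesis
    using rel hom_in_carrier[OF Qclass_hom c(4)] by (simp add: group.is_monoid[OF group_Qgrp])
qed

section \<open>The isomorphism\<close>

lemma Hclass_commutator_pi1:
  "u \<in> carrier (pi1 g) \<Longrightarrow> v \<in> carrier (pi1 g) \<Longrightarrow>
     Hclass g (wcomm u v) = commutator (Hgrp g) (Hclass g u) (Hclass g v)"
  using hom_commutator[OF group_pi1 group_Hgrp Hclass_hom_pi1] wcomm_eq_commutator[of u "surf_gens g" v]
  by (simp add: pi1_def)

lemma (in group) hom_DirProd_integer_group_center: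
  assumes f: "f \<in> hom K G" and z: "z \<in> center G"
  shows "(\<lambda>x. f (fst x) \<otimes> z [^] snd x) \<in> hom (K \<times>\<times> integer_group) G"
proof (rule homI)
  have zk: "z [^] k \<in> center G" for k :: int by (rule int_pow_in_center[OF z])
  have zc: "z \<in> carrier G" "z [^] k \<in> carrier G" for k :: int using zk z center_subset by blast+
  fix x y assume "x \<in> carrier (K \<times>\<times> integer_group)" "y \<in> carrier (K \<times>\<times> integer_group)"
  then obtain u a v b where xy: "x = (u, a)" "y = (v, b)" and u: "u \<in> carrier K" and v: "v \<in> carrier K"
    by auto
  have fc: "f u \<in> carrier G" "f v \<in> carrier G" using hom_in_carrier[OF f] u v by auto
  show "f (fst x) \<otimes> z [^] snd x \<in> carrier G" using fc zc by (simp add: xy)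
  have "f (fst x) \<otimes> z [^] snd x \<otimes> (f (fst y) \<otimes> z [^] snd y) = f u \<otimes> ((z [^] a \<otimes> f v) \<otimes> z [^] b)"
    using fc zc by (simp add: xy m_assoc)
  also have "z [^] a \<otimes> f v = f v \<otimes> z [^] a" by (rule center_commute[OF zk fc(2)])
  also have "f u \<otimes> ((f v \<otimes> z [^] a) \<otimes> z [^] b) =
      f (fst (x \<otimes>\<^bsub>K \<times>\<times> integer_group\<^esub> y)) \<otimes> z [^] snd (x \<otimes>\<^bsub>K \<times>\<times> integer_group\<^esub> y)"
    using fc zc by (simp add: xy hom_mult[OF f u v] int_pow_mult m_assoc)
  finally show "f (fst (x \<otimes>\<^bsub>K \<times>\<times> integer_group\<^esub> y)) \<otimes> z [^] snd (x \<otimes>\<^bsub>K \<times>\<times> integer_group\<^esub> y) =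
      f (fst x) \<otimes> z [^] snd x \<otimes> (f (fst y) \<otimes> z [^] snd y)" ..
qed

lemma Qgrp_to_Hgrp:
  obtains \<Phi> where "\<Phi> \<in> hom (Qgrp g) (Hgrp g)"
    and "\<And>w k. w \<in> carrier (pi1 g) \<Longrightarrow>
           \<Phi> (Qclass g (w, k)) = Hclass g w \<otimes>\<^bsub>Hgrp g\<^esub> Hclass g (lett Sig) [^]\<^bsub>Hgrp g\<^esub> k"
proof -
  interpret H: group "Hgrp g" by (rule group_Hgrp)
  let ?\<sigma> = "Hclass g (lett Sig)"
  define \<Phi>\<^sub>0 where "\<Phi>\<^sub>0 x = Hclass g (fst x) \<otimes>\<^bsub>Hgrp g\<^esub> ?\<sigma> [^]\<^bsub>Hgrp g\<^esub> snd x" for x :: "gen fword \<times> int"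
  have hom: "\<Phi>\<^sub>0 \<in> hom (PxS g) (Hgrp g)"
    unfolding \<Phi>\<^sub>0_def[abs_def] PxS_def
    by (rule H.hom_DirProd_integer_group_center[OF Hclass_hom_pi1 Hclass_Sig_in_center])
  have "normal_closure (PxS g) (Qrel g) \<subseteq> kernel (PxS g) (Hgrp g) \<Phi>\<^sub>0"
  proof (rule group.normal_closure_subset_kernel[OF group_PxS group_Hgrp hom Qrel_subset_carrier])
    fix r assume "r \<in> Qrel g"
    then obtain u v where r: "r = (wcomm u v, - 2 * omega g u v)"
      and u: "u \<in> carrier (pi1 g)" and v: "v \<in> carrier (pi1 g)"
      by (auto simp: Qrel_def)
    have "\<Phi>\<^sub>0 r = ?\<sigma> [^]\<^bsub>Hgrp g\<^esub> (2 * omega g u v) \<otimes>\<^bsub>Hgrp g\<^esub> ?\<sigma> [^]\<^bsub>Hgrp g\<^esub> (- 2 * omega g u v)"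
      by (simp add: \<Phi>\<^sub>0_def r Hclass_commutator_pi1[OF u v] commutator_Hclass[OF u v])
    also have "\<dots> = \<one>\<^bsub>Hgrp g\<^esub>"
      using Hclass_lett_in_carrier[OF Sig_in_Hg_gens] by (simp flip: H.int_pow_mult)
    finally show "\<Phi>\<^sub>0 r = \<one>\<^bsub>Hgrp g\<^esub>" .
  qed
  then obtain \<Phi> where "\<Phi> \<in> hom (Qgrp g) (Hgrp g)" "\<And>x. x \<in> carrier (PxS g) \<Longrightarrow> \<Phi> (Qclass g x) = \<Phi>\<^sub>0 x"
    unfolding Qgrp_def Qclass_def[abs_def]
    using FactGroup_lift[OF Qrel_closure_normal group_Hgrp hom] by metis
  then show ?thesis using that by (simp add: \<Phi>\<^sub>0_def carrier_PxS)
qed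

definition Qgen :: "nat \<Rightarrow> gen \<Rightarrow> (gen fword \<times> int) set" where
  "Qgen g y = (if y = Sig then Qclass g ([], 1) else Qclass g (lett y, 0))"

lemma Qclass_lett_in_carrier: "y \<in> surf_gens g \<Longrightarrow> Qclass g (lett y, 0) \<in> carrier (Qgrp g)"
  using hom_in_carrier[OF Qclass_hom] lett_in_pi1 by (simp add: carrier_PxS)

lemma Qgen_image: "Qgen g ` Hg_gens g \<subseteq> carrier (Qgrp g)"
  using Hg_gens_cases Qclass_lett_in_carrier Qclass_Sig_in_center[of g] group.center_subset[OF group_Qgrp, of g]
  by (auto simp: Qgen_def)

lemma Qgen_rels: "r \<in> Hg_rels g \<Longrightarrow> free_lift (Qgrp g) (Qgen g) r = \<one>\<^bsub>Qgrp g\<^esub>"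
proof (rule group.Hg_relsI[OF group_Qgrp Qgen_image])
  interpret Q: group "Qgrp g" by (rule group_Qgrp)
  have \<sigma>: "Qclass g ([], 1) \<in> center (Qgrp g)" by (rule Qclass_Sig_in_center)
  fix x y assume x: "x \<in> surf_gens g" and y: "y \<in> surf_gens g"
  show "commutator (Qgrp g) (Qgen g x) (Qgen g y) = Qgen g Sig [^]\<^bsub>Qgrp g\<^esub> (2 * omega g (lett x) (lett y))"
    using x y Sig_notin_surf_gens commutator_Qclass[OF lett_in_pi1[OF x] lett_in_pi1[OF y]]
    by (auto simp: Qgen_def simp flip: Qclass_Sig_pow)
  show "commutator (Qgrp g) (Qgen g Sig) (Qgen g x) = \<one>\<^bsub>Qgrp g\<^esub>"
    using x Sig_notin_surf_gens Q.center_commute[OF \<sigma> Qclass_lett_in_carrier[OF x]]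
      Q.commutator_eq_one_iff[OF subsetD[OF Q.center_subset \<sigma>] Qclass_lett_in_carrier[OF x]]
    by (auto simp: Qgen_def)
qed

lemma Hgrp_to_Qgrp:
  obtains \<Psi> where "\<Psi> \<in> hom (Hgrp g) (Qgrp g)"
    and "\<Psi> (Hclass g (lett Sig)) = Qclass g ([], 1)"
    and "\<And>w. w \<in> carrier (pi1 g) \<Longrightarrow> \<Psi> (Hclass g w) = Qclass g (w, 0)"
proof -
  obtain \<Psi> where \<Psi>: "\<Psi> \<in> hom (Hgrp g) (Qgrp g)"
    and \<Psi>_Hclass: "\<And>w. w \<in> carrier (free_group (Hg_gens g)) \<Longrightarrow> \<Psi> (Hclass g w) = free_lift (Qgrp g) (Qgen g) w"
    using Hgrp_lift[OF group_Qgrp Qgen_image Qgen_rels] by metis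
  have \<Psi>_lett: "\<Psi> (Hclass g (lett y)) = Qgen g y" if "y \<in> Hg_gens g" for y
    using \<Psi>_Hclass[OF letter_in_carrier_free_group[OF that]] group.free_lift_letter[OF group_Qgrp Qgen_image that]
    by (simp add: lett_def)
  show ?thesis
  proof (rule that[OF \<Psi>])
    show "\<Psi> (Hclass g (lett Sig)) = Qclass g ([], 1)" using \<Psi>_lett[OF Sig_in_Hg_gens] by (simp add: Qgen_def)
    have incl: "(\<lambda>w. (w, 0::int)) \<in> hom (pi1 g) (PxS g)"
      by (rule homI) (simp_all add: carrier_PxS mult_PxS)
    fix w assume w: "w \<in> carrier (pi1 g)"
    show "\<Psi> (Hclass g w) = Qclass g (w, 0)"
    proof (rule free_group_hom_eqI[OF group_Qgrp _ _ _ w[unfolded pi1_def]])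
      show "(\<lambda>w. \<Psi> (Hclass g w)) \<in> hom (free_group (surf_gens g)) (Qgrp g)"
        using hom_compose[OF Hclass_hom_pi1 \<Psi>] by (simp add: pi1_def comp_def)
      show "(\<lambda>w. Qclass g (w, 0)) \<in> hom (free_group (surf_gens g)) (Qgrp g)"
        using hom_compose[OF incl Qclass_hom] by (simp add: pi1_def comp_def)
      show "\<Psi> (Hclass g [(y, True)]) = Qclass g ([(y, True)], 0)" if "y \<in> surf_gens g" for y
        using \<Psi>_lett[OF subsetD[OF surf_gens_subset_Hg_gens that]] that Sig_notin_surf_gens
        by (auto simp: Qgen_def lett_def)
    qed
  qed
qed

lemma Qgrp_iso_Hgrp:
  obtains \<Phi> where "\<Phi> \<in> iso (Qgrp g) (Hgrp g)"
    and "\<And>w k. w \<in> carrier (pi1 g) \<Longrightarrow>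
           \<Phi> (Qclass g (w, k)) = Hclass g w \<otimes>\<^bsub>Hgrp g\<^esub> Hclass g (lett Sig) [^]\<^bsub>Hgrp g\<^esub> k"
proof -
  interpret H: group "Hgrp g" by (rule group_Hgrp)
  obtain \<Phi> where \<Phi>: "\<Phi> \<in> hom (Qgrp g) (Hgrp g)"
    and \<Phi>_Qclass: "\<And>w k. w \<in> carrier (pi1 g) \<Longrightarrow>
           \<Phi> (Qclass g (w, k)) = Hclass g w \<otimes>\<^bsub>Hgrp g\<^esub> Hclass g (lett Sig) [^]\<^bsub>Hgrp g\<^esub> k"
    using Qgrp_to_Hgrp[of g] by metis
  obtain \<Psi> where \<Psi>: "\<Psi> \<in> hom (Hgrp g) (Qgrp g)"
    and \<Psi>_Sig: "\<Psi> (Hclass g (lett Sig)) = Qclass g ([], 1)"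
    and \<Psi>_Hclass: "\<And>w. w \<in> carrier (pi1 g) \<Longrightarrow> \<Psi> (Hclass g w) = Qclass g (w, 0)"
    using Hgrp_to_Qgrp[of g] by metis
  have nil: "[] \<in> carrier (pi1 g)" by (simp add: pi1_def carrier_free_group)
  have \<Phi>_Sig: "\<Phi> (Qclass g ([], 1)) = Hclass g (lett Sig)"
    using \<Phi>_Qclass[OF nil, of 1] hom_one[OF Hclass_hom_pi1 group_pi1 group_Hgrp]
      Hclass_lett_in_carrier[OF Sig_in_Hg_gens] by (simp add: pi1_def)
  have Psi_Phi: "\<Psi> (\<Phi> q) = q" if "q \<in> carrier (Qgrp g)" for q
  proof -
    obtain w k where w: "w \<in> carrier (pi1 g)" and q: "q = Qclass g (w, k)"
      using \<open>q \<in> carrier (Qgrp g)\<close> unfolding carrier_Qgrp carrier_PxS by blast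
    have \<sigma>: "Hclass g (lett Sig) \<in> carrier (Hgrp g)" by (rule Hclass_lett_in_carrier[OF Sig_in_Hg_gens])
    have "\<Psi> (\<Phi> q) = \<Psi> (Hclass g w \<otimes>\<^bsub>Hgrp g\<^esub> Hclass g (lett Sig) [^]\<^bsub>Hgrp g\<^esub> k)"
      by (simp add: q \<Phi>_Qclass[OF w])
    also have "\<dots> = \<Psi> (Hclass g w) \<otimes>\<^bsub>Qgrp g\<^esub> \<Psi> (Hclass g (lett Sig)) [^]\<^bsub>Qgrp g\<^esub> k"
      using hom_in_carrier[OF Hclass_hom_pi1 w] \<sigma>
      by (simp add: hom_mult[OF \<Psi>] hom_int_pow[OF \<Psi> \<sigma> group_Hgrp group_Qgrp])
    also have "\<dots> = q" by (simp add: \<Psi>_Hclass[OF w] \<Psi>_Sig q Qclass_split[OF w, of k])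
    finally show ?thesis .
  qed
  have Phi_Psi: "\<Phi> (\<Psi> Z) = Z" if "Z \<in> carrier (Hgrp g)" for Z
  proof -
    obtain w where w: "w \<in> carrier (free_group (Hg_gens g))" and Z: "Z = Hclass g w"
      using \<open>Z \<in> carrier (Hgrp g)\<close> unfolding carrier_Hgrp by blast
    have "\<Phi> (\<Psi> (Hclass g w)) = Hclass g w"
    proof (rule free_group_hom_eqI[OF group_Hgrp _ Hclass_hom _ w])
      show "(\<lambda>w. \<Phi> (\<Psi> (Hclass g w))) \<in> hom (free_group (Hg_gens g)) (Hgrp g)"
        using hom_compose[OF hom_compose[OF Hclass_hom \<Psi>] \<Phi>] by (simp add: comp_def)
      fix y assume y: "y \<in> Hg_gens g"
      show "\<Phi> (\<Psi> (Hclass g [(y, True)])) = Hclass g [(y, True)]"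
      proof (cases "y = Sig")
        case False
        then have "y \<in> surf_gens g" using y Hg_gens_cases by blast
        then show ?thesis
          using \<Psi>_Hclass \<Phi>_Qclass lett_in_pi1 Hclass_lett_in_carrier[OF y] by (simp add: lett_def)
      qed (use \<Psi>_Sig \<Phi>_Sig in \<open>simp add: lett_def\<close>)
    qed
    then show ?thesis by (simp add: Z)
  qed
  have "bij_betw \<Phi> (carrier (Qgrp g)) (carrier (Hgrp g))"
    by (rule bij_betw_byWitness[where f' = \<Psi>])
      (use Psi_Phi Phi_Psi hom_in_carrier[OF \<Phi>] hom_in_carrier[OF \<Psi>] in auto)
  then show ?thesis using that \<Phi> \<Phi>_Qclass by (simp add: iso_def)
qed

section \<open>Symplectic matrices\<close>

definition mat_mult :: "'a set \<Rightarrow> ('a \<Rightarrow> 'a \<Rightarrow> 'b::comm_ring_1) \<Rightarrow> ('a \<Rightarrow> 'a \<Rightarrow> 'b) \<Rightarrow> 'a \<Rightarrow> 'a \<Rightarrow> 'b" where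
  "mat_mult S U V = (\<lambda>p r. \<Sum>q\<in>S. U p q * V q r)"

lemma mat_mult_assoc: "finite S \<Longrightarrow> mat_mult S (mat_mult S U V) W = mat_mult S U (mat_mult S V W)"
  unfolding mat_mult_def sum_distrib_left sum_distrib_right
  by (intro ext, subst sum.swap) (simp add: mult.assoc)

lemma mat_mult_cong:
  "(\<And>q. q \<in> S \<Longrightarrow> U p q = U' p q) \<Longrightarrow> (\<And>q. q \<in> S \<Longrightarrow> V q r = V' q r) \<Longrightarrow>
     mat_mult S U V p r = mat_mult S U' V' p r"
  unfolding mat_mult_def by (rule sum.cong) auto

lemma mat_mult_scalar_right:
  assumes "finite S" "r \<in> S" "\<And>q. q \<in> S \<Longrightarrow> E q r = (if q = r then c else 0)"
  shows "mat_mult S U E p r = U p r * c"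
proof -
  have "mat_mult S U E p r = (\<Sum>q\<in>S. if q = r then U p r * c else 0)"
    unfolding mat_mult_def by (rule sum.cong) (simp_all add: assms(3))
  then show ?thesis using assms(1,2) by simp
qed

lemma mat_mult_scalar_left:
  assumes "finite S" "p \<in> S" "\<And>q. q \<in> S \<Longrightarrow> E p q = (if p = q then c else 0)"
  shows "mat_mult S E U p r = c * U p r"
proof -
  have "mat_mult S E U p r = (\<Sum>q\<in>S. if p = q then c * U p r else 0)"
    unfolding mat_mult_def by (rule sum.cong) (simp_all add: assms(3))
  then show ?thesis using assms(1,2) by simp
qed

text \<open>In matrix notation: \<open>M\<^sup>T J M = J\<close>, \<open>M M' = 1\<close> and \<open>J\<^sup>2 = -1\<close> give \<open>M J M\<^sup>T = J\<close>,
  because \<open>M\<^sup>T J = J M'\<close> and hence \<open>M J M\<^sup>T J = M J J M' = -1\<close>.\<close>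
lemma symplectic_transpose:
  fixes M M' J :: "'a \<Rightarrow> 'a \<Rightarrow> 'b::comm_ring_1"
  assumes S: "finite S"
    and MJM: "\<And>p q. p \<in> S \<Longrightarrow> q \<in> S \<Longrightarrow> mat_mult S (mat_mult S (\<lambda>a b. M b a) J) M p q = J p q"
    and inverse: "\<And>p q. p \<in> S \<Longrightarrow> q \<in> S \<Longrightarrow> mat_mult S M M' p q = (if p = q then 1 else 0)"
    and JJ: "\<And>p q. p \<in> S \<Longrightarrow> q \<in> S \<Longrightarrow> mat_mult S J J p q = (if p = q then -1 else 0)"
    and x: "x \<in> S" and y: "y \<in> S"
  shows "mat_mult S (mat_mult S M J) (\<lambda>a b. M b a) x y = J x y"
proof -
  let ?Mt = "\<lambda>a b. M b a"
  let ?N = "mat_mult S (mat_mult S M J) ?Mt"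
  have MtJ: "mat_mult S ?Mt J p r = mat_mult S J M' p r" if p: "p \<in> S" and r: "r \<in> S" for p r
  proof -
    have "mat_mult S ?Mt J p r = mat_mult S (mat_mult S ?Mt J) (mat_mult S M M') p r"
      using mat_mult_scalar_right[OF S r, of "mat_mult S M M'" 1] inverse r by simp
    also have "\<dots> = mat_mult S (mat_mult S (mat_mult S ?Mt J) M) M' p r"
      by (simp add: mat_mult_assoc[OF S])
    also have "\<dots> = mat_mult S J M' p r"
      by (rule mat_mult_cong) (use MJM p in auto)
    finally show ?thesis .
  qed
  have NJ: "mat_mult S ?N J p r = (if p = r then -1 else 0)" if p: "p \<in> S" and r: "r \<in> S" for p r
  proof -
    have "mat_mult S ?N J p r = mat_mult S (mat_mult S M J) (mat_mult S ?Mt J) p r"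
      by (simp add: mat_mult_assoc[OF S])
    also have "\<dots> = mat_mult S (mat_mult S M J) (mat_mult S J M') p r"
      by (rule mat_mult_cong) (use MtJ r in auto)
    also have "\<dots> = mat_mult S M (mat_mult S (mat_mult S J J) M') p r"
      by (simp add: mat_mult_assoc[OF S])
    also have "\<dots> = mat_mult S M (\<lambda>a b. - M' a b) p r"
    proof (rule mat_mult_cong)
      fix a assume a: "a \<in> S"
      show "mat_mult S (mat_mult S J J) M' a r = - M' a r"
        using mat_mult_scalar_left[OF S a, of "mat_mult S J J" "-1" M' r] JJ[OF a] by simp
    qed simp
    also have "\<dots> = - mat_mult S M M' p r"
      by (simp add: mat_mult_def sum_negf)
    finally show ?thesis using inverse p r by simp
  qed
  have "- ?N x y = mat_mult S ?N (mat_mult S J J) x y"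
    using mat_mult_scalar_right[OF S y, of "mat_mult S J J" "-1"] JJ y by simp
  also have "\<dots> = mat_mult S (mat_mult S ?N J) J x y"
    by (simp add: mat_mult_assoc[OF S])
  also have "\<dots> = - J x y"
    using mat_mult_scalar_left[OF S x, of "mat_mult S ?N J" "-1"] NJ x by simp
  finally show ?thesis by simp
qed

section \<open>Mapping classes preserve the intersection form\<close>

definition heis :: "(int \<times> int \<times> int) monoid" where
  "heis = \<lparr>carrier = UNIV,
     monoid.mult = (\<lambda>(a, b, c) (a', b', c'). (a + a', b + b', c + c' + a * b')),
     one = (0, 0, 0)\<rparr>"

lemma heis_mult [simp]: "(a, b, c) \<otimes>\<^bsub>heis\<^esub> (a', b', c') = (a + a', b + b', c + c' + a * b')"
  by (simp add: heis_def)

lemma heis_one [simp]: "\<one>\<^bsub>heis\<^esub> = (0, 0, 0)"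
  by (simp add: heis_def)

lemma carrier_heis [simp]: "carrier heis = UNIV"
  by (simp add: heis_def)

lemma group_heis: "group heis"
proof (rule groupI)
  fix x y z :: "int \<times> int \<times> int"
  show "x \<otimes>\<^bsub>heis\<^esub> y \<otimes>\<^bsub>heis\<^esub> z = x \<otimes>\<^bsub>heis\<^esub> (y \<otimes>\<^bsub>heis\<^esub> z)"
    by (cases x; cases y; cases z) (simp add: algebra_simps)
  show "\<one>\<^bsub>heis\<^esub> \<otimes>\<^bsub>heis\<^esub> x = x" by (cases x) simp
  show "\<exists>y \<in> carrier heis. y \<otimes>\<^bsub>heis\<^esub> x = \<one>\<^bsub>heis\<^esub>"
  proof (cases x)
    case (fields a b c)
    then show ?thesis by (intro bexI[where x = "(-a, -b, a * b - c)"]) simp_all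
  qed
qed simp_all

lemma inv_heis: "inv\<^bsub>heis\<^esub> (a, b, c) = (-a, -b, a * b - c)"
  by (rule group.inv_equality[OF group_heis]) simp_all

lemma commutator_heis: "commutator heis (a, b, c) (a', b', c') = (0, 0, a * b' - a' * b)"
  by (simp add: commutator_def inv_heis algebra_simps)

text \<open>On a commutator, the last coordinate of \<open>heis_coords p q\<close> is the \<open>2 \<times> 2\<close> minor of the
  exponent sums at \<open>p\<close> and \<open>q\<close>; applied to the boundary word this reads off \<open>M\<^sup>T J M\<close>.\<close>
definition heis_coords :: "gen \<Rightarrow> gen \<Rightarrow> gen fword \<Rightarrow> int \<times> int \<times> int" where
  "heis_coords p q = free_lift heis (\<lambda>y. (if y = p then 1 else 0, if y = q then 1 else 0, 0))"

lemma heis_coords_hom: "heis_coords p q \<in> hom (free_group Y) heis"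
  unfolding heis_coords_def by (rule group.free_lift_hom[OF group_heis]) simp

lemma heis_coords_expsum: "fst (heis_coords p q w) = expsum w p \<and> fst (snd (heis_coords p q w)) = expsum w q"
proof (induction w)
  case (Cons l w)
  obtain a b c where "heis_coords p q w = (a, b, c)" by (cases "heis_coords p q w")
  with Cons show ?case
    by (cases l) (auto simp: heis_coords_def group.free_lift_Cons[OF group_heis] letter_val_def inv_heis expsum_Cons)
qed (simp add: heis_coords_def group.free_lift_Nil[OF group_heis] expsum_def)

lemma hom_foldr_mult:
  assumes "group G" "group H" "h \<in> hom G H" "\<And>i. i \<in> set l \<Longrightarrow> f i \<in> carrier G"
  shows "h (foldr (\<lambda>i acc. f i \<otimes>\<^bsub>G\<^esub> acc) l \<one>\<^bsub>G\<^esub>) = foldr (\<lambda>i acc. h (f i) \<otimes>\<^bsub>H\<^esub> acc) l \<one>\<^bsub>H\<^esub>"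
proof -
  interpret group_hom G H h using assms by (simp add: group_hom_def group_hom_axioms_def)
  have "foldr (\<lambda>i acc. f i \<otimes>\<^bsub>G\<^esub> acc) l \<one>\<^bsub>G\<^esub> \<in> carrier G \<and>
      h (foldr (\<lambda>i acc. f i \<otimes>\<^bsub>G\<^esub> acc) l \<one>\<^bsub>G\<^esub>) = foldr (\<lambda>i acc. h (f i) \<otimes>\<^bsub>H\<^esub> acc) l \<one>\<^bsub>H\<^esub>"
    using assms(4) by (induction l) auto
  then show ?thesis ..
qed

lemma boundary_word_eq_foldr:
  "boundary_word g = foldr (\<lambda>i acc. commutator (pi1 g) (lett (A i)) (lett (B i)) \<otimes>\<^bsub>pi1 g\<^esub> acc) [1..<g+1] \<one>\<^bsub>pi1 g\<^esub>"
proof -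
  have "red (concat (map (\<lambda>i. wcomm (lett (A i)) (lett (B i))) l)) =
      foldr (\<lambda>i acc. commutator (pi1 g) (lett (A i)) (lett (B i)) \<otimes>\<^bsub>pi1 g\<^esub> acc) l \<one>\<^bsub>pi1 g\<^esub>"
    if "set l \<subseteq> {1..g}" for l
    using that
  proof (induction l)
    case (Cons i l)
    then have i: "i \<in> {1..g}" by simp
    have "wcomm (lett (A i)) (lett (B i)) = commutator (pi1 g) (lett (A i)) (lett (B i))"
      using wcomm_eq_commutator[OF lett_in_pi1[OF A_in_surf_gens[OF i], unfolded pi1_def]
          lett_in_pi1[OF B_in_surf_gens[OF i], unfolded pi1_def]]
      by (simp add: pi1_def)
    moreover have "red (concat (map (\<lambda>i. wcomm (lett (A i)) (lett (B i))) (i # l))) =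
        red (wcomm (lett (A i)) (lett (B i)) @ red (concat (map (\<lambda>i. wcomm (lett (A i)) (lett (B i))) l)))"
      by (simp add: red_append_red_right)
    ultimately show ?case using Cons by (simp add: pi1_def)
  qed (simp add: pi1_def)
  moreover have "set [1..<g+1] \<subseteq> {1..g}" by auto
  ultimately show ?thesis unfolding boundary_word_def by blast
qed

definition abel_mat :: "(gen fword \<Rightarrow> gen fword) \<Rightarrow> gen \<Rightarrow> gen \<Rightarrow> int" where
  "abel_mat h x p = expsum (h (lett x)) p"

lemma heis_coords_boundary:
  assumes h: "h \<in> hom (pi1 g) (pi1 g)"
  shows "heis_coords p q (h (boundary_word g)) =
    (0, 0, \<Sum>i\<in>{1..g}. abel_mat h (A i) p * abel_mat h (B i) q - abel_mat h (B i) p * abel_mat h (A i) q)"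
proof -
  let ?E = "\<lambda>w. heis_coords p q (h w)"
  let ?d = "\<lambda>i. abel_mat h (A i) p * abel_mat h (B i) q - abel_mat h (B i) p * abel_mat h (A i) q"
  have E: "?E \<in> hom (pi1 g) heis"
    using hom_compose[OF h heis_coords_hom[of p q "surf_gens g", folded pi1_def]] by (simp add: comp_def)
  have lett: "lett (A i) \<in> carrier (pi1 g)" "lett (B i) \<in> carrier (pi1 g)" if "i \<in> {1..g}" for i
    using lett_in_pi1 A_in_surf_gens B_in_surf_gens that by auto
  have comm: "?E (commutator (pi1 g) (lett (A i)) (lett (B i))) = (0, 0, ?d i)" if "i \<in> {1..g}" for i
  proof -
    obtain a b c where a: "?E (lett (A i)) = (a, b, c)" by (cases "?E (lett (A i))")
    obtain a' b' c' where b: "?E (lett (B i)) = (a', b', c')" by (cases "?E (lett (B i))")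
    show ?thesis
      using hom_commutator[OF group_pi1 group_heis E lett[OF that]] a b
        heis_coords_expsum[of p q "h (lett (A i))"] heis_coords_expsum[of p q "h (lett (B i))"]
      by (simp add: commutator_heis abel_mat_def)
  qed
  let ?c = "\<lambda>i. commutator (pi1 g) (lett (A i)) (lett (B i))"
  have "?E (boundary_word g) = foldr (\<lambda>i acc. ?E (?c i) \<otimes>\<^bsub>heis\<^esub> acc) [1..<g+1] \<one>\<^bsub>heis\<^esub>"
    unfolding boundary_word_eq_foldr
    by (rule hom_foldr_mult[OF group_pi1 group_heis E]) (use lett group.commutator_closed[OF group_pi1] in auto)
  also have "\<dots> = foldr (\<lambda>i acc. (0, 0, ?d i) \<otimes>\<^bsub>heis\<^esub> acc) [1..<g+1] \<one>\<^bsub>heis\<^esub>"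
    by (rule foldr_cong) (use comm in auto)
  also have "\<dots> = (0, 0, sum_list (map ?d [1..<g+1]))"
  proof -
    have "foldr (\<lambda>i acc. (0, 0, ?d i) \<otimes>\<^bsub>heis\<^esub> acc) l \<one>\<^bsub>heis\<^esub> = (0, 0, sum_list (map ?d l))" for l
      by (induction l) simp_all
    then show ?thesis .
  qed
  also have "sum_list (map ?d [1..<g+1]) = (\<Sum>i\<in>{1..g}. ?d i)"
    by (simp add: sum_list_distinct_conv_sum_set atLeastLessThanSuc_atLeastAtMost del: upt_Suc)
  finally show ?thesis .
qed

lemma abel_mat_minors_boundary:
  assumes h: "h \<in> hom (pi1 g) (pi1 g)" and fixed: "h (boundary_word g) = boundary_word g"
  shows "(\<Sum>i\<in>{1..g}. abel_mat h (A i) p * abel_mat h (B i) q - abel_mat h (B i) p * abel_mat h (A i) q)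
    = omega g (lett p) (lett q)"
proof -
  have id: "(\<lambda>w. w) \<in> hom (pi1 g) (pi1 g)" by (rule homI) simp_all
  have "abel_mat (\<lambda>w. w) x p = expsum (lett p) x" for x p
    by (simp add: abel_mat_def lett_def expsum_letter)
  then show ?thesis
    using heis_coords_boundary[OF h, of p q] heis_coords_boundary[OF id, of p q]
    by (simp add: fixed omega_def)
qed

lemma sum_surf_gens: "(\<Sum>x\<in>surf_gens g. F x) = (\<Sum>i\<in>{1..g}. F (A i)) + (\<Sum>i\<in>{1..g}. F (B i))"
  unfolding surf_gens_eq by (subst sum.union_disjoint) (auto simp: sum.reindex inj_on_def)

lemma sum_omega_lett:
  "(\<Sum>a\<in>surf_gens g. \<Sum>b\<in>surf_gens g. omega g (lett a) (lett b) * F a b) =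
     (\<Sum>i\<in>{1..g}. F (A i) (B i) - F (B i) (A i))"
proof -
  have "(\<Sum>b\<in>surf_gens g. omega g (lett (A i)) (lett b) * F (A i) b) = F (A i) (B i)"
    and "(\<Sum>b\<in>surf_gens g. omega g (lett (B i)) (lett b) * F (B i) b) = - F (B i) (A i)"
    if i: "i \<in> {1..g}" for i
  proof -
    have "(\<Sum>b\<in>surf_gens g. omega g (lett (A i)) (lett b) * F (A i) b) =
        (\<Sum>b\<in>surf_gens g. if b = B i then F (A i) b else 0)"
      by (rule sum.cong) (simp_all add: omega_lett_A[OF i])
    then show "(\<Sum>b\<in>surf_gens g. omega g (lett (A i)) (lett b) * F (A i) b) = F (A i) (B i)"
      using B_in_surf_gens[OF i] finite_surf_gens by simp
    have "(\<Sum>b\<in>surf_gens g. omega g (lett (B i)) (lett b) * F (B i) b) =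
        (\<Sum>b\<in>surf_gens g. if b = A i then - F (B i) b else 0)"
      by (rule sum.cong) (simp_all add: omega_lett_B[OF i])
    then show "(\<Sum>b\<in>surf_gens g. omega g (lett (B i)) (lett b) * F (B i) b) = - F (B i) (A i)"
      using A_in_surf_gens[OF i] finite_surf_gens by simp
  qed
  then show ?thesis by (simp add: sum_surf_gens[where g = g] sum_subtractf sum_negf)
qed

lemma mat_mult_sandwich: "mat_mult S (mat_mult S P Q) R x y = (\<Sum>a\<in>S. \<Sum>b\<in>S. Q a b * (P x a * R b y))"
  unfolding mat_mult_def sum_distrib_right
  by (subst sum.swap) (simp add: algebra_simps)

lemma omega_lett_squared:
  assumes "p \<in> surf_gens g"
  shows "mat_mult (surf_gens g) (\<lambda>a b. omega g (lett a) (lett b)) (\<lambda>a b. omega g (lett a) (lett b)) p q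
    = (if p = q then -1 else 0)"
  using assms
proof (cases rule: surf_gensE)
  case (1 k)
  have "mat_mult (surf_gens g) (\<lambda>a b. omega g (lett a) (lett b)) (\<lambda>a b. omega g (lett a) (lett b)) p q =
      (\<Sum>a\<in>surf_gens g. if a = B k then omega g (lett a) (lett q) else 0)"
    unfolding mat_mult_def by (rule sum.cong) (simp_all add: 1 omega_lett_A[OF 1(1)])
  then show ?thesis using 1 B_in_surf_gens[OF 1(1)] finite_surf_gens by (simp add: omega_lett_B[OF 1(1)])
next
  case (2 k)
  have "mat_mult (surf_gens g) (\<lambda>a b. omega g (lett a) (lett b)) (\<lambda>a b. omega g (lett a) (lett b)) p q =
      (\<Sum>a\<in>surf_gens g. if a = A k then - omega g (lett a) (lett q) else 0)"
    unfolding mat_mult_def by (rule sum.cong) (simp_all add: 2 omega_lett_B[OF 2(1)])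
  then show ?thesis using 2 A_in_surf_gens[OF 2(1)] finite_surf_gens by (simp add: omega_lett_A[OF 2(1)])
qed

lemma expsum_hom_image:
  assumes h: "h \<in> hom (pi1 g) (pi1 g)" and u: "u \<in> carrier (pi1 g)"
  shows "expsum (h u) p = (\<Sum>x\<in>surf_gens g. expsum u x * abel_mat h x p)"
proof (rule free_group_hom_eqI[OF group_integer_group _ _ _ u[unfolded pi1_def]])
  show "(\<lambda>u. expsum (h u) p) \<in> hom (free_group (surf_gens g)) integer_group"
    using hom_compose[OF h expsum_hom[of p "surf_gens g", folded pi1_def]] by (simp add: pi1_def comp_def)
  show "(\<lambda>u. \<Sum>x\<in>surf_gens g. expsum u x * abel_mat h x p) \<in> hom (free_group (surf_gens g)) integer_group"
    by (rule homI) (simp_all add: expsum_red expsum_append ring_distribs sum.distrib)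
  show "expsum (h [(y, True)]) p = (\<Sum>x\<in>surf_gens g. expsum [(y, True)] x * abel_mat h x p)"
    if "y \<in> surf_gens g" for y
  proof -
    have "(\<Sum>x\<in>surf_gens g. expsum [(y, True)] x * abel_mat h x p) =
        (\<Sum>x\<in>surf_gens g. if y = x then abel_mat h x p else 0)"
      by (rule sum.cong) (simp_all add: expsum_letter)
    then show ?thesis using that finite_surf_gens by (simp add: abel_mat_def lett_def)
  qed
qed

lemma mcg_action_hom: "\<psi> \<in> mcg_action g \<Longrightarrow> \<psi> \<in> hom (pi1 g) (pi1 g)"
  by (simp add: mcg_action_def iso_def)

lemma mcg_action_inv_into_left:
  "\<psi> \<in> mcg_action g \<Longrightarrow> u \<in> carrier (pi1 g) \<Longrightarrow> inv_into (carrier (pi1 g)) \<psi> (\<psi> u) = u"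
  by (simp add: mcg_action_def iso_def bij_betw_def inv_into_f_f)

lemma mcg_action_inv_into_right:
  "\<psi> \<in> mcg_action g \<Longrightarrow> u \<in> carrier (pi1 g) \<Longrightarrow> \<psi> (inv_into (carrier (pi1 g)) \<psi> u) = u"
  by (simp add: mcg_action_def iso_def bij_betw_def f_inv_into_f)

lemma mcg_action_inv_into: "\<psi> \<in> mcg_action g \<Longrightarrow> inv_into (carrier (pi1 g)) \<psi> \<in> mcg_action g"
proof -
  assume \<psi>: "\<psi> \<in> mcg_action g"
  interpret P: group "pi1 g" by (rule group_pi1)
  have "foldr (\<lambda>i acc. commutator (pi1 g) (lett (A i)) (lett (B i)) \<otimes>\<^bsub>pi1 g\<^esub> acc) l \<one>\<^bsub>pi1 g\<^esub>
      \<in> carrier (pi1 g)" if "set l \<subseteq> {1..g}" for l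
    using that by (induction l) (auto simp: lett_in_pi1 A_in_surf_gens B_in_surf_gens)
  moreover have "set [1..<g+1] \<subseteq> {1..g}" by auto
  ultimately have "boundary_word g \<in> carrier (pi1 g)"
    unfolding boundary_word_eq_foldr by blast
  then have "inv_into (carrier (pi1 g)) \<psi> (boundary_word g) = boundary_word g"
    using mcg_action_inv_into_left[OF \<psi>] \<psi> by (metis (mono_tags) mcg_action_def mem_Collect_eq)
  moreover have "inv_into (carrier (pi1 g)) \<psi> \<in> iso (pi1 g) (pi1 g)"
    by (rule group.iso_set_sym[OF group_pi1]) (use \<psi> in \<open>simp add: mcg_action_def\<close>)
  ultimately show ?thesis by (simp add: mcg_action_def)
qed

lemma mcg_action_preserves_omega_lett:
  assumes \<psi>: "\<psi> \<in> mcg_action g" and x: "x \<in> surf_gens g" and y: "y \<in> surf_gens g"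
  shows "omega g (\<psi> (lett x)) (\<psi> (lett y)) = omega g (lett x) (lett y)"
proof -
  let ?S = "surf_gens g"
  let ?M = "abel_mat \<psi>"
  let ?J = "\<lambda>a b. omega g (lett a) (lett b)"
  let ?\<psi>' = "inv_into (carrier (pi1 g)) \<psi>"
  have h: "\<psi> \<in> hom (pi1 g) (pi1 g)" by (rule mcg_action_hom[OF \<psi>])
  have MJM: "mat_mult ?S (mat_mult ?S (\<lambda>a b. ?M b a) ?J) ?M p q = ?J p q" for p q
  proof -
    have "mat_mult ?S (mat_mult ?S (\<lambda>a b. ?M b a) ?J) ?M p q =
        (\<Sum>i\<in>{1..g}. ?M (A i) p * ?M (B i) q - ?M (B i) p * ?M (A i) q)"
      unfolding mat_mult_sandwich sum_omega_lett ..
    also have "\<dots> = ?J p q"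
      by (rule abel_mat_minors_boundary[OF h]) (use \<psi> in \<open>simp add: mcg_action_def\<close>)
    finally show ?thesis .
  qed
  have inverse: "mat_mult ?S ?M (abel_mat ?\<psi>') p q = (if p = q then 1 else 0)" if p: "p \<in> ?S" for p q
  proof -
    have "mat_mult ?S ?M (abel_mat ?\<psi>') p q = expsum (?\<psi>' (\<psi> (lett p))) q"
      using expsum_hom_image[OF mcg_action_hom[OF mcg_action_inv_into[OF \<psi>]] hom_in_carrier[OF h lett_in_pi1[OF p]]]
      by (simp add: mat_mult_def abel_mat_def)
    then show ?thesis
      using mcg_action_inv_into_left[OF \<psi> lett_in_pi1[OF p]] by (simp add: lett_def expsum_letter)
  qed
  have "mat_mult ?S (mat_mult ?S ?M ?J) (\<lambda>a b. ?M b a) x y = ?J x y"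
    by (rule symplectic_transpose[OF finite_surf_gens MJM inverse omega_lett_squared x y])
  moreover have "mat_mult ?S (mat_mult ?S ?M ?J) (\<lambda>a b. ?M b a) x y = omega g (\<psi> (lett x)) (\<psi> (lett y))"
    unfolding mat_mult_sandwich sum_omega_lett by (simp add: omega_def abel_mat_def)
  ultimately show ?thesis by simp
qed

lemma mcg_action_preserves_omega:
  assumes \<psi>: "\<psi> \<in> mcg_action g" and u: "u \<in> carrier (pi1 g)" and v: "v \<in> carrier (pi1 g)"
  shows "omega g (\<psi> u) (\<psi> v) = omega g u v"
proof -
  have h: "\<psi> \<in> hom (free_group (surf_gens g)) (free_group (surf_gens g))"
    using mcg_action_hom[OF \<psi>] by (simp add: pi1_def)
  have "omega g (\<psi> (lett x)) (\<psi> v) = omega g (lett x) v" if x: "x \<in> surf_gens g" for x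
  proof (rule free_group_hom_eqI[OF group_integer_group _ omega_hom_right _ v[unfolded pi1_def]])
    show "(\<lambda>v. omega g (\<psi> (lett x)) (\<psi> v)) \<in> hom (free_group (surf_gens g)) integer_group"
      using hom_compose[OF h omega_hom_right] by (simp add: comp_def)
    show "omega g (\<psi> (lett x)) (\<psi> [(y, True)]) = omega g (lett x) [(y, True)]" if "y \<in> surf_gens g" for y
      using mcg_action_preserves_omega_lett[OF \<psi> x that] by (simp add: lett_def)
  qed
  then show ?thesis
  proof (intro free_group_hom_eqI[OF group_integer_group _ omega_hom_left _ u[unfolded pi1_def]])
    show "(\<lambda>u. omega g (\<psi> u) (\<psi> v)) \<in> hom (free_group (surf_gens g)) integer_group"
      using hom_compose[OF h omega_hom_left] by (simp add: comp_def)
  qed (simp add: lett_def)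
qed

section \<open>The kernel of \<open>\<phi>\<^sub>1\<close>\<close>

lemma kernel_phi1:
  "kernel (pi1 g) (Hgrp g) (phi1 g) = {w \<in> carrier (pi1 g). (w, 0) \<in> normal_closure (PxS g) (Qrel g)}"
proof -
  obtain \<Phi> where \<Phi>: "\<Phi> \<in> iso (Qgrp g) (Hgrp g)"
    and \<Phi>_Qclass: "\<And>w k. w \<in> carrier (pi1 g) \<Longrightarrow>
           \<Phi> (Qclass g (w, k)) = Hclass g w \<otimes>\<^bsub>Hgrp g\<^esub> Hclass g (lett Sig) [^]\<^bsub>Hgrp g\<^esub> k"
    using Qgrp_iso_Hgrp[of g] by metis
  interpret \<Phi>: group_hom "Qgrp g" "Hgrp g" \<Phi>
    using \<Phi> by (simp add: group_hom_def group_hom_axioms_def group_Qgrp group_Hgrp iso_def)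
  have "phi1 g w = \<one>\<^bsub>Hgrp g\<^esub> \<longleftrightarrow> (w, 0) \<in> normal_closure (PxS g) (Qrel g)"
    if w: "w \<in> carrier (pi1 g)" for w
  proof -
    have c: "(w, 0) \<in> carrier (PxS g)" using w by (simp add: carrier_PxS)
    have "phi1 g w = \<Phi> (Qclass g (w, 0))"
      using \<Phi>_Qclass[OF w, of 0] hom_in_carrier[OF Hclass_hom_pi1 w] by (simp add: phi1_def)
    moreover have "\<Phi> (Qclass g (w, 0)) = \<one>\<^bsub>Hgrp g\<^esub> \<longleftrightarrow> Qclass g (w, 0) = \<one>\<^bsub>Qgrp g\<^esub>"
      using \<Phi> hom_in_carrier[OF Qclass_hom c] \<Phi>.inj_on_one_iff
      by (auto simp: iso_def bij_betw_def)
    ultimately show ?thesis using Qclass_eq_one_iff[OF c] by simp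
  qed
  then show ?thesis by (auto simp: kernel_def)
qed

lemma mcg_action_kernel_phi1_subset:
  assumes \<psi>: "\<psi> \<in> mcg_action g"
  shows "\<psi> ` kernel (pi1 g) (Hgrp g) (phi1 g) \<subseteq> kernel (pi1 g) (Hgrp g) (phi1 g)"
proof -
  interpret P: group "PxS g" by (rule group_PxS)
  have h: "\<psi> \<in> hom (pi1 g) (pi1 g)" by (rule mcg_action_hom[OF \<psi>])
  define \<psi>\<^sub>\<sigma> where "\<psi>\<^sub>\<sigma> x = (\<psi> (fst x), snd x)" for x :: "gen fword \<times> int"
  have \<psi>\<^sub>\<sigma>: "\<psi>\<^sub>\<sigma> \<in> hom (PxS g) (PxS g)"
    by (rule homI) (auto simp: \<psi>\<^sub>\<sigma>_def carrier_PxS mult_PxS hom_in_carrier[OF h] hom_mult[OF h])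
  have "\<psi>\<^sub>\<sigma> ` Qrel g \<subseteq> Qrel g"
  proof
    fix r assume "r \<in> \<psi>\<^sub>\<sigma> ` Qrel g"
    then obtain u v where u: "u \<in> carrier (pi1 g)" and v: "v \<in> carrier (pi1 g)"
      and r: "r = \<psi>\<^sub>\<sigma> (wcomm u v, - 2 * omega g u v)"
      by (auto simp: Qrel_def)
    have "\<psi> (wcomm u v) = wcomm (\<psi> u) (\<psi> v)"
      using hom_commutator[OF group_pi1 group_pi1 h u v] hom_in_carrier[OF h] u v
        wcomm_eq_commutator[of _ "surf_gens g"] by (simp add: pi1_def)
    then have "r = (wcomm (\<psi> u) (\<psi> v), - 2 * omega g (\<psi> u) (\<psi> v))"
      by (simp add: r \<psi>\<^sub>\<sigma>_def mcg_action_preserves_omega[OF \<psi> u v])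
    then show "r \<in> Qrel g"
      using hom_in_carrier[OF h u] hom_in_carrier[OF h v] by (auto simp: Qrel_def)
  qed
  then have closure: "\<psi>\<^sub>\<sigma> ` normal_closure (PxS g) (Qrel g) \<subseteq> normal_closure (PxS g) (Qrel g)"
    using P.hom_image_normal_closure[OF group_PxS \<psi>\<^sub>\<sigma> Qrel_subset_carrier] P.normal_closure_mono by blast
  show ?thesis
  proof
    fix w assume "w \<in> \<psi> ` kernel (pi1 g) (Hgrp g) (phi1 g)"
    then obtain u where u: "u \<in> carrier (pi1 g)" "(u, 0) \<in> normal_closure (PxS g) (Qrel g)" and w: "w = \<psi> u"
      unfolding kernel_phi1 by blast
    have "\<psi>\<^sub>\<sigma> (u, 0) \<in> normal_closure (PxS g) (Qrel g)" using closure u(2) by blast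
    then show "w \<in> kernel (pi1 g) (Hgrp g) (phi1 g)"
      unfolding kernel_phi1 using hom_in_carrier[OF h u(1)] by (simp add: w \<psi>\<^sub>\<sigma>_def)
  qed
qed

lemma mcg_action_kernel_phi1:
  assumes \<psi>: "\<psi> \<in> mcg_action g"
  shows "\<psi> ` kernel (pi1 g) (Hgrp g) (phi1 g) = kernel (pi1 g) (Hgrp g) (phi1 g)"
proof
  show "\<psi> ` kernel (pi1 g) (Hgrp g) (phi1 g) \<subseteq> kernel (pi1 g) (Hgrp g) (phi1 g)"
    by (rule mcg_action_kernel_phi1_subset[OF \<psi>])
  show "kernel (pi1 g) (Hgrp g) (phi1 g) \<subseteq> \<psi> ` kernel (pi1 g) (Hgrp g) (phi1 g)"
  proof
    fix w assume w: "w \<in> kernel (pi1 g) (Hgrp g) (phi1 g)"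
    let ?\<psi>' = "inv_into (carrier (pi1 g)) \<psi>"
    have "?\<psi>' w \<in> kernel (pi1 g) (Hgrp g) (phi1 g)"
      using mcg_action_kernel_phi1_subset[OF mcg_action_inv_into[OF \<psi>]] w by blast
    moreover have "w = \<psi> (?\<psi>' w)" using mcg_action_inv_into_right[OF \<psi>] w by (simp add: kernel_def)
    ultimately show "w \<in> \<psi> ` kernel (pi1 g) (Hgrp g) (phi1 g)" by blast
  qed
qed

theorem mainTheorem5:
  fixes g :: nat
  assumes "g \<ge> 1"
  shows "(\<exists>h \<in> iso (Qgrp g) (Hgrp g).
            (\<forall>i \<in> {1..g}. h (Qclass g (lett (A i), 0)) = Hclass g (lett (A i))
                        \<and> h (Qclass g (lett (B i), 0)) = Hclass g (lett (B i)))
          \<and> h (Qclass g ([], 1)) = Hclass g (lett Sig))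
       \<and> (\<forall>\<psi> \<in> mcg_action g. \<psi> ` kernel (pi1 g) (Hgrp g) (phi1 g) = kernel (pi1 g) (Hgrp g) (phi1 g))"
proof (intro conjI ballI mcg_action_kernel_phi1)
  obtain \<Phi> where \<Phi>: "\<Phi> \<in> iso (Qgrp g) (Hgrp g)"
    and \<Phi>_Qclass: "\<And>w k. w \<in> carrier (pi1 g) \<Longrightarrow>
           \<Phi> (Qclass g (w, k)) = Hclass g w \<otimes>\<^bsub>Hgrp g\<^esub> Hclass g (lett Sig) [^]\<^bsub>Hgrp g\<^esub> k"
    using Qgrp_iso_Hgrp[of g] by metis
  interpret H: group "Hgrp g" by (rule group_Hgrp)
  have gen: "\<Phi> (Qclass g (lett x, 0)) = Hclass g (lett x)" if "x \<in> surf_gens g" for x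
    using \<Phi>_Qclass[OF lett_in_pi1[OF that], of 0] hom_in_carrier[OF Hclass_hom_pi1 lett_in_pi1[OF that]]
    by simp
  have "\<Phi> (Qclass g ([], 1)) = Hclass g (lett Sig)"
    using \<Phi>_Qclass[of "[]" 1] hom_one[OF Hclass_hom_pi1 group_pi1 group_Hgrp]
      Hclass_lett_in_carrier[OF Sig_in_Hg_gens]
    by (simp add: pi1_def carrier_free_group)
  with \<Phi> gen A_in_surf_gens B_in_surf_gens
  show "\<exists>h \<in> iso (Qgrp g) (Hgrp g).
      (\<forall>i \<in> {1..g}. h (Qclass g (lett (A i), 0)) = Hclass g (lett (A i))
                  \<and> h (Qclass g (lett (B i), 0)) = Hclass g (lett (B i)))
      \<and> h (Qclass g ([], 1)) = Hclass g (lett Sig)"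
    by blast
qed

end
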